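(* Let $F$ be a forest and $\alpha:V(F)\to\mathbb{N}$. Suppose $X_{F^\alpha}$ is not 2-$s$-positive, and that $T$ is the unique connected component of $F^\alpha$ with $X_T$ not 2-$s$-positive. If $T$ is bipartite with bipartition class sizes $(r+2,r)$ for some $r\ge1$, then $F^\alpha$ has no isolated vertices.
   Context: Clan graph $F^\alpha$: replace each vertex $v$ by a clique $K_{\alpha(v)}$ and join all vertices of the cliques of adjacent vertices. $X_H$ is Stanley's chromatic symmetric function of a graph $H$: $X_H=\sum_\kappa\prod_{v}x_{\kappa(v)}$ over proper colorings $\kappa:V(H)\to\mathbb{Z}_{>0}$. A symmetric function $f$ is 2-$s$-positive if $[s_\lambda]f\ge0$ for all partitions $\lambda$ with at most two parts ($s_\lambda$ Schur functions). *)

theory Defs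
  imports Main "HOL-Library.FuncSet"
begin

text \<open>A finite simple graph is a finite vertex set V together with a symmetric,
irreflexive adjacency relation E (only its restriction to V matters).\<close>

definition simple_graph :: "'a set \<Rightarrow> ('a \<Rightarrow> 'a \<Rightarrow> bool) \<Rightarrow> bool" where
  "simple_graph V E \<longleftrightarrow> finite V \<and> (\<forall>u\<in>V. \<forall>v\<in>V. E u v \<longrightarrow> E v u) \<and> (\<forall>v\<in>V. \<not> E v v)"

definition is_cycle :: "'a set \<Rightarrow> ('a \<Rightarrow> 'a \<Rightarrow> bool) \<Rightarrow> 'a list \<Rightarrow> bool" where
  "is_cycle V E cs \<longleftrightarrow> length cs \<ge> 3 \<and> distinct cs \<and> set cs \<subseteq> V
     \<and> (\<forall>i. Suc i < length cs \<longrightarrow> E (cs ! i) (cs ! Suc i))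
     \<and> E (last cs) (hd cs)"

definition forest :: "'a set \<Rightarrow> ('a \<Rightarrow> 'a \<Rightarrow> bool) \<Rightarrow> bool" where
  "forest V E \<longleftrightarrow> simple_graph V E \<and> (\<nexists>cs. is_cycle V E cs)"

definition reachable :: "'a set \<Rightarrow> ('a \<Rightarrow> 'a \<Rightarrow> bool) \<Rightarrow> 'a \<Rightarrow> 'a \<Rightarrow> bool" where
  "reachable V E = (\<lambda>u v. u \<in> V \<and> v \<in> V \<and> E u v)\<^sup>*\<^sup>*"

definition is_component :: "'a set \<Rightarrow> ('a \<Rightarrow> 'a \<Rightarrow> bool) \<Rightarrow> 'a set \<Rightarrow> bool" where
  "is_component V E C \<longleftrightarrow> (\<exists>x\<in>V. C = {y\<in>V. reachable V E x y})"

definition bipartite_classes :: "'a set \<Rightarrow> ('a \<Rightarrow> 'a \<Rightarrow> bool) \<Rightarrow> 'a set \<Rightarrow> 'a set \<Rightarrow> bool" where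
  "bipartite_classes V E A B \<longleftrightarrow> A \<union> B = V \<and> A \<inter> B = {}
     \<and> (\<forall>u\<in>A. \<forall>v\<in>A. \<not> E u v) \<and> (\<forall>u\<in>B. \<forall>v\<in>B. \<not> E u v)"

definition isolated_vertex :: "'a set \<Rightarrow> ('a \<Rightarrow> 'a \<Rightarrow> bool) \<Rightarrow> 'a \<Rightarrow> bool" where
  "isolated_vertex V E v \<longleftrightarrow> v \<in> V \<and> (\<forall>u\<in>V. \<not> E v u)"

text \<open>F^alpha: vertex v is replaced by the clique on {(v,0),...,(v,alpha v - 1)};
two copies are adjacent iff they come from the same vertex (and differ) or from
adjacent vertices.\<close>
definition clan_vertices :: "'a set \<Rightarrow> ('a \<Rightarrow> nat) \<Rightarrow> ('a \<times> nat) set" where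
  "clan_vertices V \<alpha> = {(v, i). v \<in> V \<and> i < \<alpha> v}"

definition clan_edges :: "('a \<Rightarrow> 'a \<Rightarrow> bool) \<Rightarrow> ('a \<times> nat) \<Rightarrow> ('a \<times> nat) \<Rightarrow> bool" where
  "clan_edges E = (\<lambda>(v, i) (w, j). (v = w \<and> i \<noteq> j) \<or> E v w)"

text \<open>A (homogeneous) symmetric function in the variables x_0, x_1, ... is represented
by its coefficient function on exponent vectors (finitely supported functions
nat => nat): f e is the coefficient of the monomial prod_i x_i^(e i).
(Variables are indexed from 0 instead of 1.)\<close>

type_synonym symfun = "(nat \<Rightarrow> nat) \<Rightarrow> int"

definition fin_supp :: "(nat \<Rightarrow> nat) \<Rightarrow> bool" where
  "fin_supp e \<longleftrightarrow> finite {i. e i \<noteq> 0}"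

text \<open>Stanley's chromatic symmetric function: the coefficient of x^e is the number
of proper colourings kappa : V -> colours whose colour class of i has size e i.\<close>
definition proper_colouring :: "'a set \<Rightarrow> ('a \<Rightarrow> 'a \<Rightarrow> bool) \<Rightarrow> ('a \<Rightarrow> nat) \<Rightarrow> bool" where
  "proper_colouring V E \<kappa> \<longleftrightarrow> (\<forall>u\<in>V. \<forall>v\<in>V. E u v \<longrightarrow> \<kappa> u \<noteq> \<kappa> v)"

definition chromatic_sym :: "'a set \<Rightarrow> ('a \<Rightarrow> 'a \<Rightarrow> bool) \<Rightarrow> symfun" where
  "chromatic_sym V E e = int (card {\<kappa> \<in> V \<rightarrow>\<^sub>E UNIV. proper_colouring V E \<kappa>
        \<and> (\<forall>i. card {v\<in>V. \<kappa> v = i} = e i)})"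

definition is_partition :: "nat list \<Rightarrow> bool" where
  "is_partition la \<longleftrightarrow> sorted_wrt (\<ge>) la \<and> (\<forall>x\<in>set la. 0 < x)"

definition young_diagram :: "nat list \<Rightarrow> (nat \<times> nat) set" where
  "young_diagram la = {(i, j). i < length la \<and> j < la ! i}"

definition ssyt :: "nat list \<Rightarrow> (nat \<Rightarrow> nat) \<Rightarrow> ((nat \<times> nat) \<Rightarrow> nat) set" where
  "ssyt la e = {T \<in> young_diagram la \<rightarrow>\<^sub>E UNIV.
      (\<forall>i j. (i, Suc j) \<in> young_diagram la \<longrightarrow> T (i, j) \<le> T (i, Suc j))
    \<and> (\<forall>i j. (Suc i, j) \<in> young_diagram la \<longrightarrow> T (i, j) < T (Suc i, j))
    \<and> (\<forall>k. card {c \<in> young_diagram la. T c = k} = e k)}"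

text \<open>Kostka number = coefficient of x^e in the Schur function s_lambda.\<close>
definition kostka :: "nat list \<Rightarrow> (nat \<Rightarrow> nat) \<Rightarrow> int" where
  "kostka la e = int (card (ssyt la e))"

definition partitions_of :: "nat \<Rightarrow> nat list set" where
  "partitions_of n = {la. is_partition la \<and> sum_list la = n}"

definition schur_expansion :: "nat \<Rightarrow> symfun \<Rightarrow> (nat list \<Rightarrow> int) \<Rightarrow> bool" where
  "schur_expansion n f c \<longleftrightarrow> (\<forall>la. la \<notin> partitions_of n \<longrightarrow> c la = 0)
     \<and> (\<forall>e. fin_supp e \<longrightarrow> f e = (\<Sum>la\<in>partitions_of n. c la * kostka la e))"

definition schur_coeff :: "nat \<Rightarrow> symfun \<Rightarrow> nat list \<Rightarrow> int" where
  "schur_coeff n f = (THE c. schur_expansion n f c)"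

definition two_s_positive :: "nat \<Rightarrow> symfun \<Rightarrow> bool" where
  "two_s_positive n f \<longleftrightarrow>
     (\<forall>la. is_partition la \<and> length la \<le> 2 \<longrightarrow> schur_coeff n f la \<ge> 0)"

definition chrom_two_s_positive :: "'a set \<Rightarrow> ('a \<Rightarrow> 'a \<Rightarrow> bool) \<Rightarrow> bool" where
  "chrom_two_s_positive V E \<longleftrightarrow> two_s_positive (card V) (chromatic_sym V E)"

end

theory Submission
  imports Defs "HOL-Combinatorics.Permutations"
begin

text \<open>
  For a graph H on n vertices let b_k(H) count the k-sets A of vertices such that A and its
  complement are both independent; this is the coefficient of the monomial x_0^(n-k) x_1^k in X_H.
  The only Schur functions containing that monomial are the s_(n-j,j) with j \<le> k, each with
  Kostka number 1, so the coefficient of s_(n-k,k) in X_H is b_k - b_(k-1), and X_H is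
  2-s-positive iff the palindromic sequence b(H) is unimodal. On disjoint unions b is a
  convolution, and convolution preserves symmetric unimodality (such sequences are sums of
  centred blocks of ones). A bipartite component with classes of sizes r + 2 and r has
  b = [k = r] + [k = r + 2], which is not unimodal; an isolated vertex would convolve it into
  the block [r \<le> k \<le> r + 3], and then, all other components being 2-s-positive, X of the whole
  graph would be 2-s-positive.

  Because Schur coefficients are defined by a definite description, the existence of Schur
  expansions is needed too; it rests on the symmetry of Kostka numbers (Bender-Knuth involution).
\<close>

section \<open>Young diagrams and semistandard tableaux\<close>

lemma young_diagram_iff: "(r, c) \<in> young_diagram la \<longleftrightarrow> r < length la \<and> c < la ! r"
  by (simp add: young_diagram_def)

lemma young_diagram_Sigma: "young_diagram la = Sigma {..<length la} (\<lambda>r. {..<la ! r})"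
  by (auto simp: young_diagram_def)

lemma finite_young_diagram [simp]: "finite (young_diagram la)"
  unfolding young_diagram_Sigma by auto

lemma partition_nth_antimono: "is_partition la \<Longrightarrow> r \<le> s \<Longrightarrow> s < length la \<Longrightarrow> la ! s \<le> la ! r"
  unfolding is_partition_def by (metis le_eq_less_or_eq order_refl sorted_wrt_nth_less)

lemma partition_nth_pos: "is_partition la \<Longrightarrow> r < length la \<Longrightarrow> 0 < la ! r"
  unfolding is_partition_def by auto

lemma young_diagram_up:
  "is_partition la \<Longrightarrow> (Suc r, c) \<in> young_diagram la \<Longrightarrow> (r, c) \<in> young_diagram la"
  unfolding young_diagram_iff using partition_nth_antimono[of la r "Suc r"] by auto

lemma young_diagram_left: "(r, Suc c) \<in> young_diagram la \<Longrightarrow> (r, c) \<in> young_diagram la"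
  unfolding young_diagram_iff by auto

lemma ssytD:
  assumes "T \<in> ssyt la e"
  shows "T \<in> young_diagram la \<rightarrow>\<^sub>E UNIV"
    "\<And>i j. (i, Suc j) \<in> young_diagram la \<Longrightarrow> T (i, j) \<le> T (i, Suc j)"
    "\<And>i j. (Suc i, j) \<in> young_diagram la \<Longrightarrow> T (i, j) < T (Suc i, j)"
    "\<And>k. card {c \<in> young_diagram la. T c = k} = e k"
  using assms unfolding ssyt_def by auto

lemma ssyt_undefined_outside:
  assumes "T \<in> ssyt la e" "x \<notin> young_diagram la"
  shows "T x = undefined"
  using ssytD(1)[OF assms(1)] assms(2) by (cases x) (auto simp: PiE_def extensional_def)

lemma kostka_nonzero_ssyt:
  assumes "kostka la e \<noteq> 0"
  obtains T where "T \<in> ssyt la e"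
proof -
  have "ssyt la e \<noteq> {}" using assms unfolding kostka_def by auto
  then show ?thesis using that by blast
qed

lemma ssyt_row_mono:
  assumes "T \<in> ssyt la e" "(r, c') \<in> young_diagram la" "c \<le> c'"
  shows "T (r, c) \<le> T (r, c')"
  using assms(3,2)
proof (induction c' rule: dec_induct)
  case base then show ?case by simp
next
  case (step m)
  then have "(r, m) \<in> young_diagram la" using young_diagram_left by blast
  then show ?case using step ssytD(2)[OF assms(1) step(4)] by simp
qed

lemma ssyt_row_le_entry:
  assumes "is_partition la" "T \<in> ssyt la e" "(r, c) \<in> young_diagram la"
  shows "r \<le> T (r, c)"
  using assms(3)
proof (induction r)
  case 0 then show ?case by simp
next
  case (Suc r)
  then have "(r, c) \<in> young_diagram la" using young_diagram_up[OF assms(1)] by blast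
  then show ?case using Suc ssytD(3)[OF assms(2) Suc(2)] by simp
qed

definition partition_exp :: "nat list \<Rightarrow> nat \<Rightarrow> nat" where
  "partition_exp la k = (if k < length la then la ! k else 0)"

lemma fin_supp_partition_exp: "fin_supp (partition_exp la)"
  unfolding fin_supp_def partition_exp_def by (rule finite_subset[of _ "{..<length la}"]) auto

lemma sum_take_nth: "sum_list (take j xs) = (\<Sum>r<min j (length xs). xs ! r)"
  by (simp add: sum_list_sum_nth atLeast0LessThan min.commute)

lemma sum_list_take_le: "sum_list (take j xs) \<le> sum_list (xs :: nat list)"
  by (metis append_take_drop_id le_add1 sum_list_append)

lemma sum_partition_exp: "(\<Sum>k<j. partition_exp la k) = sum_list (take j la)"
proof -
  have "(\<Sum>k<j. partition_exp la k) = (\<Sum>k<min j (length la). la ! k)"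
    by (rule sum.mono_neutral_cong_right) (auto simp: partition_exp_def)
  then show ?thesis by (simp add: sum_take_nth)
qed

lemma card_young_diagram_rows: "card {x \<in> young_diagram la. fst x < j} = sum_list (take j la)"
proof -
  have "{x \<in> young_diagram la. fst x < j} = Sigma {..<min j (length la)} (\<lambda>r. {..<la ! r})"
    by (auto simp: young_diagram_def)
  then show ?thesis by (simp add: card_SigmaI sum_take_nth)
qed

lemma card_young_diagram: "card (young_diagram la) = sum_list la"
proof -
  have "{x \<in> young_diagram la. fst x < length la} = young_diagram la"
    by (auto simp: young_diagram_def)
  then show ?thesis using card_young_diagram_rows[of la "length la"] by simp
qed

lemma card_ssyt_entries_less:
  assumes "T \<in> ssyt la e"
  shows "card {x \<in> young_diagram la. T x < j} = (\<Sum>k<j. e k)"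
proof (induction j)
  case 0 then show ?case by simp
next
  case (Suc j)
  have "{x \<in> young_diagram la. T x < Suc j}
      = {x \<in> young_diagram la. T x < j} \<union> {x \<in> young_diagram la. T x = j}"
    by auto
  moreover have "card \<dots> = card {x \<in> young_diagram la. T x < j}
      + card {x \<in> young_diagram la. T x = j}"
    by (rule card_Un_disjoint) auto
  ultimately show ?case using Suc ssytD(4)[OF assms] by simp
qed

lemma ssyt_content_dominated:
  assumes "is_partition mu" "T \<in> ssyt mu e"
  shows "(\<Sum>k<j. e k) \<le> sum_list (take j mu)"
proof -
  have "{x \<in> young_diagram mu. T x < j} \<subseteq> {x \<in> young_diagram mu. fst x < j}"
    using ssyt_row_le_entry[OF assms] by fastforce
  then have "card {x \<in> young_diagram mu. T x < j} \<le> card {x \<in> young_diagram mu. fst x < j}"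
    by (intro card_mono) auto
  then show ?thesis using card_ssyt_entries_less[OF assms(2)] card_young_diagram_rows by simp
qed

lemma ssyt_content_total:
  assumes "T \<in> ssyt mu e"
  obtains J where "(\<Sum>k<J. e k) = sum_list mu"
proof -
  define J where "J = Suc (Max (T ` young_diagram mu))"
  have "{x \<in> young_diagram mu. T x < J} = young_diagram mu"
    using J_def by (auto simp: less_Suc_eq_le)
  then have "(\<Sum>k<J. e k) = sum_list mu"
    using card_ssyt_entries_less[OF assms, of J] card_young_diagram by simp
  then show ?thesis by (rule that)
qed

lemma kostka_nonzero_dominates:
  assumes "is_partition mu" "kostka mu (partition_exp la) \<noteq> 0"
  shows "sum_list (take j la) \<le> sum_list (take j mu)"
proof -
  obtain T where T: "T \<in> ssyt mu (partition_exp la)" using kostka_nonzero_ssyt[OF assms(2)] .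
  show ?thesis using ssyt_content_dominated[OF assms(1) T, of j] sum_partition_exp[of la j] by simp
qed

lemma kostka_nonzero_sum_eq:
  assumes "is_partition mu" "kostka mu (partition_exp la) \<noteq> 0"
  shows "sum_list la = sum_list mu"
proof -
  have "sum_list la \<le> sum_list mu"
    using kostka_nonzero_dominates[OF assms, of "length la"] sum_list_take_le[of "length la" mu]
    by simp
  moreover obtain T where T: "T \<in> ssyt mu (partition_exp la)"
    using kostka_nonzero_ssyt[OF assms(2)] .
  obtain J where "(\<Sum>k<J. partition_exp la k) = sum_list mu" using ssyt_content_total[OF T] .
  then have "sum_list mu \<le> sum_list la"
    using sum_partition_exp[of la J] sum_list_take_le[of J la] by simp
  ultimately show ?thesis by simp
qed

definition superstandard :: "nat list \<Rightarrow> nat \<times> nat \<Rightarrow> nat" where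
  "superstandard la x = (if x \<in> young_diagram la then fst x else undefined)"

lemma superstandard_ssyt:
  assumes "is_partition la"
  shows "superstandard la \<in> ssyt la (partition_exp la)"
proof -
  have "card {c \<in> young_diagram la. superstandard la c = k} = partition_exp la k" for k
  proof -
    have "{c \<in> young_diagram la. superstandard la c = k}
        = (if k < length la then {k} \<times> {..<la ! k} else {})"
      by (auto simp: superstandard_def young_diagram_def)
    then show ?thesis by (simp add: partition_exp_def)
  qed
  moreover have "superstandard la (i, j) < superstandard la (Suc i, j)"
    if "(Suc i, j) \<in> young_diagram la" for i j
    using that young_diagram_up[OF assms] by (auto simp: superstandard_def)
  moreover have "superstandard la (i, j) \<le> superstandard la (i, Suc j)"
    if "(i, Suc j) \<in> young_diagram la" for i j
    using that young_diagram_left by (auto simp: superstandard_def)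
  ultimately show ?thesis unfolding ssyt_def by (auto simp: superstandard_def)
qed

text \<open>The la ! 0 + ... + la ! r entries that are at most r can only fill the first r + 1 rows.\<close>

lemma ssyt_partition_exp_unique:
  assumes P: "is_partition la" and T: "T \<in> ssyt la (partition_exp la)"
  shows "T = superstandard la"
proof
  fix x
  show "T x = superstandard la x"
  proof (cases "x \<in> young_diagram la")
    case False
    then show ?thesis using ssyt_undefined_outside[OF T] by (simp add: superstandard_def)
  next
    case True
    obtain r c where x: "x = (r, c)" by force
    let ?below = "{x \<in> young_diagram la. T x < Suc r}"
      and ?rows = "{x \<in> young_diagram la. fst x < Suc r}"
    have "?below \<subseteq> ?rows"
      using ssyt_row_le_entry[OF P T] by fastforce
    moreover have "card ?below = card ?rows"
      using card_ssyt_entries_less[OF T] card_young_diagram_rows sum_partition_exp by simp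
    ultimately have "?below = ?rows" by (intro card_subset_eq) auto
    moreover have "(r, c) \<in> ?rows" using True x by simp
    ultimately have "T (r, c) < Suc r" by blast
    moreover have "r \<le> T (r, c)" using ssyt_row_le_entry[OF P T] True x by simp
    ultimately show ?thesis using True x by (simp add: superstandard_def)
  qed
qed

lemma kostka_diagonal:
  assumes "is_partition la"
  shows "kostka la (partition_exp la) = 1"
proof -
  have "ssyt la (partition_exp la) = {superstandard la}"
    using superstandard_ssyt[OF assms] ssyt_partition_exp_unique[OF assms] by blast
  then show ?thesis by (simp add: kostka_def)
qed

section \<open>Bender-Knuth involution\<close>

definition swap_adj :: "nat \<Rightarrow> nat \<Rightarrow> nat" where
  "swap_adj i k = (if k = i then Suc i else if k = Suc i then i else k)"

lemma comp_swap_adj_swap_adj: "e \<circ> swap_adj i \<circ> swap_adj i = e"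
  by (auto simp: fun_eq_iff swap_adj_def)

definition row_count_less :: "nat list \<Rightarrow> (nat \<times> nat \<Rightarrow> nat) \<Rightarrow> nat \<Rightarrow> nat \<Rightarrow> nat" where
  "row_count_less la T r k = card {c. c < la ! r \<and> T (r, c) < k}"

lemma downward_closed_eq_lessThan:
  assumes "finite D" "\<And>c c'. c \<in> D \<Longrightarrow> c' \<le> c \<Longrightarrow> c' \<in> D"
  shows "D = {..<card D}"
proof -
  have sub: "D \<subseteq> {..<card D}"
  proof
    fix c assume "c \<in> D"
    then have "{..c} \<subseteq> D" using assms(2) by auto
    then have "card {..c} \<le> card D" using assms(1) by (intro card_mono)
    then show "c \<in> {..<card D}" by simp
  qed
  then show ?thesis using assms(1) by (intro card_subset_eq) auto
qed

lemma row_count_less_le: "row_count_less la T r k \<le> la ! r"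
proof -
  have "card {c. c < la ! r \<and> T (r, c) < k} \<le> card {..<la ! r}" by (intro card_mono) auto
  then show ?thesis by (simp add: row_count_less_def)
qed

lemma row_count_less_mono: "k \<le> k' \<Longrightarrow> row_count_less la T r k \<le> row_count_less la T r k'"
  unfolding row_count_less_def by (intro card_mono) auto

lemma less_iff_row_count_less:
  assumes T: "T \<in> ssyt la e" and rc: "(r, c) \<in> young_diagram la"
  shows "T (r, c) < k \<longleftrightarrow> c < row_count_less la T r k"
proof -
  define D where "D = {c. c < la ! r \<and> T (r, c) < k}"
  have fin: "finite D" unfolding D_def by (rule finite_subset[of _ "{..<la ! r}"]) auto
  have eq: "D = {..<card D}"
  proof (rule downward_closed_eq_lessThan[OF fin])
    fix c c' assume "c \<in> D" "c' \<le> c"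
    then have "(r, c) \<in> young_diagram la" "c' < la ! r" "T (r, c) < k" using rc
      by (auto simp: D_def young_diagram_iff)
    moreover then have "T (r, c') \<le> T (r, c)" using ssyt_row_mono[OF T] \<open>c' \<le> c\<close> by blast
    ultimately show "c' \<in> D" by (auto simp: D_def)
  qed
  define n where "n = card D"
  have eq2: "D = {..<n}" using eq n_def by simp
  have "c < la ! r" using rc by (simp add: young_diagram_iff)
  then have "c \<in> D \<longleftrightarrow> T (r, c) < k" by (simp add: D_def)
  moreover have "row_count_less la T r k = n" unfolding row_count_less_def n_def D_def by simp
  ultimately show ?thesis using eq2 by simp
qed

lemma row_count_less_next_row:
  assumes P: "is_partition la" and T: "T \<in> ssyt la e" and r: "Suc r < length la"
  shows "row_count_less la T (Suc r) (Suc k) \<le> row_count_less la T r k"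
proof -
  have "{c. c < la ! Suc r \<and> T (Suc r, c) < Suc k} \<subseteq> {c. c < la ! r \<and> T (r, c) < k}"
  proof safe
    fix c assume c: "c < la ! Suc r" "T (Suc r, c) < Suc k"
    then have "(Suc r, c) \<in> young_diagram la" using r by (simp add: young_diagram_iff)
    then have "T (r, c) < T (Suc r, c)" "(r, c) \<in> young_diagram la"
      using ssytD(3)[OF T] young_diagram_up[OF P] by auto
    then show "c < la ! r" "T (r, c) < k" using c by (auto simp: young_diagram_iff)
  qed
  then show ?thesis unfolding row_count_less_def by (intro card_mono) auto
qed

text \<open>
  row_count_less la T r k is the number of entries below k in row r, i.e. the column where the
  entries \<ge> k start. In row r the columns from bk_lower to bk_upper - 1 hold the free entries
  i and i+1 (an i with no i+1 directly below, an i+1 with no i directly above), the i's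
  ending at column row_count_less la T r (Suc i). The involution swaps the numbers of free i's
  and free (i+1)'s, moving this split point to bk_split.
\<close>

definition bk_lower :: "nat list \<Rightarrow> nat \<Rightarrow> (nat \<times> nat \<Rightarrow> nat) \<Rightarrow> nat \<Rightarrow> nat" where
  "bk_lower la i T r = max (row_count_less la T r i)
      (if Suc r < length la then row_count_less la T (Suc r) (Suc (Suc i)) else 0)"

definition bk_upper :: "nat list \<Rightarrow> nat \<Rightarrow> (nat \<times> nat \<Rightarrow> nat) \<Rightarrow> nat \<Rightarrow> nat" where
  "bk_upper la i T r = (if r = 0 then row_count_less la T 0 (Suc (Suc i))
      else min (row_count_less la T r (Suc (Suc i))) (row_count_less la T (r - 1) i))"

definition bk_split :: "nat list \<Rightarrow> nat \<Rightarrow> (nat \<times> nat \<Rightarrow> nat) \<Rightarrow> nat \<Rightarrow> nat" where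
  "bk_split la i T r = bk_lower la i T r + bk_upper la i T r - row_count_less la T r (Suc i)"

definition bender_knuth :: "nat list \<Rightarrow> nat \<Rightarrow> (nat \<times> nat \<Rightarrow> nat) \<Rightarrow> (nat \<times> nat \<Rightarrow> nat)" where
  "bender_knuth la i T = (\<lambda>x. if x \<in> young_diagram la then
      (if T x = i \<or> T x = Suc i then (if snd x < bk_split la i T (fst x) then i else Suc i)
       else T x)
      else undefined)"

lemma bk_split_bounds:
  assumes P: "is_partition la" and T: "T \<in> ssyt la e" and r: "r < length la"
  shows "row_count_less la T r i \<le> bk_lower la i T r"
    "bk_lower la i T r \<le> row_count_less la T r (Suc i)"
    "row_count_less la T r (Suc i) \<le> bk_upper la i T r"
    "bk_upper la i T r \<le> row_count_less la T r (Suc (Suc i))"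
    "bk_lower la i T r \<le> bk_split la i T r" "bk_split la i T r \<le> bk_upper la i T r"
    "row_count_less la T r i \<le> bk_split la i T r"
    "bk_split la i T r \<le> row_count_less la T r (Suc (Suc i))"
proof -
  have a: "row_count_less la T r i \<le> row_count_less la T r (Suc i)"
    "row_count_less la T r (Suc i) \<le> row_count_less la T r (Suc (Suc i))"
    by (auto intro: row_count_less_mono)
  show 1: "row_count_less la T r i \<le> bk_lower la i T r" by (simp add: bk_lower_def)
  show 2: "bk_lower la i T r \<le> row_count_less la T r (Suc i)"
    using a row_count_less_next_row[OF P T, of r "Suc i"] by (auto simp: bk_lower_def)
  show 3: "row_count_less la T r (Suc i) \<le> bk_upper la i T r"
    using a row_count_less_next_row[OF P T, of "r - 1" i] r by (auto simp: bk_upper_def)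
  show 4: "bk_upper la i T r \<le> row_count_less la T r (Suc (Suc i))" by (auto simp: bk_upper_def)
  show "bk_lower la i T r \<le> bk_split la i T r" "bk_split la i T r \<le> bk_upper la i T r"
    using 1 2 3 4 by (auto simp: bk_split_def)
  then show "row_count_less la T r i \<le> bk_split la i T r"
    "bk_split la i T r \<le> row_count_less la T r (Suc (Suc i))"
    using 1 4 by auto
qed

lemma bender_knuth_less_iff:
  assumes P: "is_partition la" and T: "T \<in> ssyt la e" and rc: "(r, c) \<in> young_diagram la"
  shows "bender_knuth la i T (r, c) < k
      \<longleftrightarrow> (if k = Suc i then c < bk_split la i T r else T (r, c) < k)"
proof -
  have r: "r < length la" using rc by (simp add: young_diagram_iff)
  note b = bk_split_bounds[OF P T r, of i]
  note it = less_iff_row_count_less[OF T rc]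
  show ?thesis
  proof (cases "T (r, c) = i \<or> T (r, c) = Suc i")
    case True
    then have "bender_knuth la i T (r, c) = (if c < bk_split la i T r then i else Suc i)"
      using rc by (simp add: bender_knuth_def)
    then show ?thesis using True by auto
  next
    case False
    then have bkT: "bender_knuth la i T (r, c) = T (r, c)" using rc by (simp add: bender_knuth_def)
    show ?thesis
    proof (cases "k = Suc i")
      case True
      have o: "T (r, c) < i \<or> Suc (Suc i) \<le> T (r, c)" using False by linarith
      have i1: "T (r, c) < i \<longleftrightarrow> c < row_count_less la T r i" using it by blast
      have i2: "T (r, c) < Suc (Suc i) \<longleftrightarrow> c < row_count_less la T r (Suc (Suc i))" using it by blast
      have e: "T (r, c) < Suc i \<longleftrightarrow> T (r, c) < i" using False by auto
      have "c < row_count_less la T r i \<or> \<not> c < row_count_less la T r (Suc (Suc i))"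
        using o i1 i2 by linarith
      then have "c < bk_split la i T r \<longleftrightarrow> c < row_count_less la T r i" using b(7) b(8) by linarith
      then show ?thesis using True bkT e i1 by simp
    next
      case False
      then show ?thesis using bkT by simp
    qed
  qed
qed

lemma row_count_less_bender_knuth:
  assumes P: "is_partition la" and T: "T \<in> ssyt la e" and r: "r < length la"
  shows "row_count_less la (bender_knuth la i T) r k
      = (if k = Suc i then bk_split la i T r else row_count_less la T r k)"
proof (cases "k = Suc i")
  case True
  have le: "bk_split la i T r \<le> la ! r"
    using bk_split_bounds(8)[OF P T r, of i] row_count_less_le[of la T r "Suc (Suc i)"] by linarith
  have "{c. c < la ! r \<and> bender_knuth la i T (r, c) < k} = {..<bk_split la i T r}"
  proof (intro set_eqI iffI)
    fix c assume c: "c \<in> {c. c < la ! r \<and> bender_knuth la i T (r, c) < k}"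
    then have "(r, c) \<in> young_diagram la" using r by (simp add: young_diagram_iff)
    then show "c \<in> {..<bk_split la i T r}"
      using c bender_knuth_less_iff[OF P T, of r c i k] True by simp
  next
    fix c assume c: "c \<in> {..<bk_split la i T r}"
    then have "(r, c) \<in> young_diagram la" using r le by (simp add: young_diagram_iff)
    then show "c \<in> {c. c < la ! r \<and> bender_knuth la i T (r, c) < k}"
      using c bender_knuth_less_iff[OF P T, of r c i k] True le by simp
  qed
  then show ?thesis using True by (simp add: row_count_less_def)
next
  case False
  have "{c. c < la ! r \<and> bender_knuth la i T (r, c) < k} = {c. c < la ! r \<and> T (r, c) < k}"
  proof (intro Collect_cong conj_cong refl)
    fix c assume "c < la ! r"
    then have "(r, c) \<in> young_diagram la" using r by (simp add: young_diagram_iff)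
    then show "bender_knuth la i T (r, c) < k \<longleftrightarrow> T (r, c) < k"
      using bender_knuth_less_iff[OF P T, of r c i k] False by simp
  qed
  then show ?thesis using False by (simp add: row_count_less_def)
qed

lemma card_young_diagram_by_rows:
  "card {x \<in> young_diagram la. P x} = (\<Sum>r<length la. card {c. c < la ! r \<and> P (r, c)})"
proof -
  have "{x \<in> young_diagram la. P x} = Sigma {..<length la} (\<lambda>r. {c. c < la ! r \<and> P (r, c)})"
    by (auto simp: young_diagram_def)
  moreover have "finite {c. c < la ! r \<and> P (r, c)}" for r
    by (rule finite_subset[of _ "{..<la ! r}"]) auto
  ultimately show ?thesis by (simp add: card_SigmaI)
qed

lemma card_row_eq_diff:
  "card {c. c < la ! r \<and> U (r, c) = k} = row_count_less la U r (Suc k) - row_count_less la U r k"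
proof -
  have "{c. c < la ! r \<and> U (r, c) = k}
      = {c. c < la ! r \<and> U (r, c) < Suc k} - {c. c < la ! r \<and> U (r, c) < k}"
    by auto
  moreover have "finite {c. c < la ! r \<and> U (r, c) < Suc k}"
    by (rule finite_subset[of _ "{..<la ! r}"]) auto
  moreover have "card ({c. c < la ! r \<and> U (r, c) < Suc k} - {c. c < la ! r \<and> U (r, c) < k})
      = card {c. c < la ! r \<and> U (r, c) < Suc k} - card {c. c < la ! r \<and> U (r, c) < k}"
    by (rule card_Diff_subset) (auto intro: finite_subset[of _ "{..<la ! r}"])
  ultimately show ?thesis unfolding row_count_less_def by simp
qed

lemma sum_max_min_shift:
  fixes m w :: "nat \<Rightarrow> nat"
  assumes "w (Suc L) = 0"
  shows "(\<Sum>r<Suc L. max (m r) (w (Suc r)))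
      + (\<Sum>r<Suc L. (if r = 0 then w 0 else min (w r) (m (r - 1))))
     = (\<Sum>r<Suc L. m r) + (\<Sum>r<Suc L. w r)"
proof -
  have A: "(\<Sum>r<Suc L. (if r = 0 then w 0 else min (w r) (m (r - 1))))
      = w 0 + (\<Sum>r<L. min (w (Suc r)) (m r))"
    by (subst sum.lessThan_Suc_shift) simp
  have B: "(\<Sum>r<Suc L. max (m r) (w (Suc r))) = (\<Sum>r<L. max (m r) (w (Suc r))) + m L"
    using assms by simp
  have C: "(\<Sum>r<L. max (m r) (w (Suc r))) + (\<Sum>r<L. min (w (Suc r)) (m r)) = (\<Sum>r<L. m r + w (Suc r))"
    by (subst sum.distrib[symmetric]) (rule sum.cong, auto)
  have D: "(\<Sum>r<Suc L. w r) = w 0 + (\<Sum>r<L. w (Suc r))"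
    by (subst sum.lessThan_Suc_shift) simp
  show ?thesis using A B C D by (simp add: sum.distrib)
qed

lemma sum_bk_lower_upper:
  "(\<Sum>r<length la. bk_lower la i T r + bk_upper la i T r)
    = (\<Sum>r<length la. row_count_less la T r i)
      + (\<Sum>r<length la. row_count_less la T r (Suc (Suc i)))"
proof (cases "length la")
  case 0 then show ?thesis by simp
next
  case (Suc L)
  define w where "w r = (if r < length la then row_count_less la T r (Suc (Suc i)) else 0)" for r
  define m where "m r = row_count_less la T r i" for r
  have "w (Suc L) = 0" using Suc by (simp add: w_def)
  note ms = sum_max_min_shift[of w L m, OF this]
  have L: "(\<Sum>r<length la. bk_lower la i T r) = (\<Sum>r<Suc L. max (m r) (w (Suc r)))"
    using Suc by (intro sum.cong) (auto simp: bk_lower_def m_def w_def)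
  have U: "(\<Sum>r<length la. bk_upper la i T r)
      = (\<Sum>r<Suc L. (if r = 0 then w 0 else min (w r) (m (r - 1))))"
    using Suc by (intro sum.cong) (auto simp: bk_upper_def m_def w_def)
  have W: "(\<Sum>r<length la. row_count_less la T r (Suc (Suc i))) = (\<Sum>r<Suc L. w r)"
    using Suc by (intro sum.cong) (auto simp: w_def)
  show ?thesis using ms L U W Suc by (simp add: sum.distrib m_def)
qed

lemma bender_knuth_extensional: "bender_knuth la i T \<in> young_diagram la \<rightarrow>\<^sub>E UNIV"
  by (auto simp: bender_knuth_def PiE_def extensional_def)

lemma bender_knuth_row_mono:
  assumes P: "is_partition la" and T: "T \<in> ssyt la e" and rc: "(r, Suc c) \<in> young_diagram la"
  shows "bender_knuth la i T (r, c) \<le> bender_knuth la i T (r, Suc c)"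
proof -
  have rc0: "(r, c) \<in> young_diagram la" using young_diagram_left[OF rc] .
  have "bender_knuth la i T (r, c) < k" if "bender_knuth la i T (r, Suc c) < k" for k
    using that bender_knuth_less_iff[OF P T rc, of i k] bender_knuth_less_iff[OF P T rc0, of i k]
      ssytD(2)[OF T rc]
    by (auto split: if_splits)
  then show ?thesis using not_less by blast
qed

lemma bender_knuth_col_strict:
  assumes P: "is_partition la" and T: "T \<in> ssyt la e" and rc: "(Suc r, c) \<in> young_diagram la"
  shows "bender_knuth la i T (r, c) < bender_knuth la i T (Suc r, c)"
proof -
  have rc0: "(r, c) \<in> young_diagram la" using young_diagram_up[OF P rc] .
  have r1: "Suc r < length la" using rc by (simp add: young_diagram_iff)
  note b0 = bk_split_bounds[OF P T, of r i] and b1 = bk_split_bounds[OF P T r1, of i]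
  have r0: "r < length la" using r1 by simp
  have "bender_knuth la i T (r, c) < k" if "bender_knuth la i T (Suc r, c) < Suc k" for k
  proof (cases "k = i")
    case True
    then have "c < bk_split la i T (Suc r)"
      using that bender_knuth_less_iff[OF P T rc, of i "Suc k"] by simp
    then have "c < row_count_less la T r i" using b1 by (simp add: bk_upper_def)
    then show ?thesis
      using True bender_knuth_less_iff[OF P T rc0, of i k] less_iff_row_count_less[OF T rc0, of i]
      by simp
  next
    case F: False
    show ?thesis
    proof (cases "k = Suc i")
      case True
      then have "T (Suc r, c) < Suc (Suc i)"
        using that bender_knuth_less_iff[OF P T rc, of i "Suc k"] by simp
      then have "c < row_count_less la T (Suc r) (Suc (Suc i))"
        using less_iff_row_count_less[OF T rc] by simp
      then have "c < bk_split la i T r" using b0[OF r0] r1 by (simp add: bk_lower_def)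
      then show ?thesis using True bender_knuth_less_iff[OF P T rc0, of i k] by simp
    next
      case False
      then have "T (Suc r, c) < Suc k"
        using F that bender_knuth_less_iff[OF P T rc, of i "Suc k"] by simp
      then have "T (r, c) < k" using ssytD(3)[OF T rc] by simp
      then show ?thesis using False bender_knuth_less_iff[OF P T rc0, of i k] by simp
    qed
  qed
  from this[of "bender_knuth la i T (Suc r, c)"] show ?thesis by simp
qed

lemma card_bender_knuth_entries:
  assumes P: "is_partition la" and T: "T \<in> ssyt la e"
  shows "card {x \<in> young_diagram la. bender_knuth la i T x = k} = e (swap_adj i k)"
proof -
  let ?U = "bender_knuth la i T"
  let ?m = "\<lambda>r. row_count_less la T r i" and ?p = "\<lambda>r. row_count_less la T r (Suc i)"
    and ?n = "\<lambda>r. row_count_less la T r (Suc (Suc i))" and ?q = "\<lambda>r. bk_split la i T r"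
  have ord: "?m r \<le> ?p r" "?p r \<le> ?n r" "?m r \<le> ?q r" "?q r \<le> ?n r"
    "?q r + ?p r = bk_lower la i T r + bk_upper la i T r" if "r < length la" for r
    using bk_split_bounds[OF P T that, of i] row_count_less_mono[of i "Suc i" la T r]
      row_count_less_mono[of "Suc i" "Suc (Suc i)" la T r]
    by (auto simp: bk_split_def)
  \<comment> \<open>max + min telescopes over the rows: this exchanges the total numbers of i's and (i+1)'s\<close>
  have LU: "(\<Sum>r<length la. ?q r) + (\<Sum>r<length la. ?p r)
      = (\<Sum>r<length la. ?m r) + (\<Sum>r<length la. ?n r)"
    using sum_bk_lower_upper[of la i T] ord(5) by (simp add: sum.distrib[symmetric])
  have sM: "(\<Sum>r<length la. ?m r) \<le> (\<Sum>r<length la. ?p r)"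
    "(\<Sum>r<length la. ?p r) \<le> (\<Sum>r<length la. ?n r)"
    "(\<Sum>r<length la. ?m r) \<le> (\<Sum>r<length la. ?q r)"
    "(\<Sum>r<length la. ?q r) \<le> (\<Sum>r<length la. ?n r)"
    using ord by (auto intro: sum_mono)
  have new_i: "(\<Sum>r<length la. ?q r - ?m r) = (\<Sum>r<length la. ?n r - ?p r)"
  proof -
    have "(\<Sum>r<length la. ?q r - ?m r) = (\<Sum>r<length la. ?q r) - (\<Sum>r<length la. ?m r)"
      using ord by (intro sum_subtractf_nat) auto
    also have "\<dots> = (\<Sum>r<length la. ?n r) - (\<Sum>r<length la. ?p r)" using LU sM by linarith
    also have "\<dots> = (\<Sum>r<length la. ?n r - ?p r)"
      using ord by (intro sum_subtractf_nat[symmetric]) auto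
    finally show ?thesis .
  qed
  have new_Suc_i: "(\<Sum>r<length la. ?n r - ?q r) = (\<Sum>r<length la. ?p r - ?m r)"
  proof -
    have "(\<Sum>r<length la. ?n r - ?q r) = (\<Sum>r<length la. ?n r) - (\<Sum>r<length la. ?q r)"
      using ord by (intro sum_subtractf_nat) auto
    also have "\<dots> = (\<Sum>r<length la. ?p r) - (\<Sum>r<length la. ?m r)" using LU sM by linarith
    also have "\<dots> = (\<Sum>r<length la. ?p r - ?m r)"
      using ord by (intro sum_subtractf_nat[symmetric]) auto
    finally show ?thesis .
  qed
  have eU: "card {x \<in> young_diagram la. ?U x = k}
      = (\<Sum>r<length la. row_count_less la ?U r (Suc k) - row_count_less la ?U r k)"
    by (simp add: card_young_diagram_by_rows card_row_eq_diff)
  also have "\<dots> = (if k = i then (\<Sum>r<length la. ?q r - ?m r)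
      else if k = Suc i then (\<Sum>r<length la. ?n r - ?q r)
      else (\<Sum>r<length la. row_count_less la T r (Suc k) - row_count_less la T r k))"
    using row_count_less_bender_knuth[OF P T] by (auto intro: sum.cong)
  also have "\<dots> = e (swap_adj i k)"
    using ssytD(4)[OF T] new_i new_Suc_i
    by (simp add: swap_adj_def card_young_diagram_by_rows card_row_eq_diff)
  finally show ?thesis .
qed

lemma bender_knuth_ssyt:
  assumes P: "is_partition la" and T: "T \<in> ssyt la e"
  shows "bender_knuth la i T \<in> ssyt la (e \<circ> swap_adj i)"
  unfolding ssyt_def
  using bender_knuth_extensional bender_knuth_row_mono[OF P T] bender_knuth_col_strict[OF P T]
    card_bender_knuth_entries[OF P T] by auto

lemma bender_knuth_bender_knuth:
  assumes P: "is_partition la" and T: "T \<in> ssyt la e"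
  shows "bender_knuth la i (bender_knuth la i T) = T"
proof
  fix x
  let ?U = "bender_knuth la i T"
  show "bender_knuth la i ?U x = T x"
  proof (cases "x \<in> young_diagram la")
    case False
    then show ?thesis using ssyt_undefined_outside[OF T False] by (simp add: bender_knuth_def)
  next
    case True
    obtain r c where x: "x = (r, c)" by force
    have r: "r < length la" using True x by (simp add: young_diagram_iff)
    have rl: "row_count_less la ?U r k
        = (if k = Suc i then bk_split la i T r else row_count_less la T r k)" for k
      using row_count_less_bender_knuth[OF P T r] .
    have "bk_lower la i ?U r = bk_lower la i T r"
      unfolding bk_lower_def using rl row_count_less_bender_knuth[OF P T, of "Suc r" i] by auto
    moreover have "bk_upper la i ?U r = bk_upper la i T r"
      unfolding bk_upper_def
      using rl r row_count_less_bender_knuth[OF P T, of "r - 1" i]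
        row_count_less_bender_knuth[OF P T, of 0 i]
      by auto
    ultimately have rpU: "bk_split la i ?U r = row_count_less la T r (Suc i)"
      using bk_split_bounds[OF P T r, of i] rl[of "Suc i"] by (simp add: bk_split_def)
    have inU: "(?U x = i \<or> ?U x = Suc i) \<longleftrightarrow> (T x = i \<or> T x = Suc i)"
      using True by (auto simp: bender_knuth_def)
    show ?thesis
    proof (cases "T x = i \<or> T x = Suc i")
      case True2: True
      have "bender_knuth la i ?U x = (if c < row_count_less la T r (Suc i) then i else Suc i)"
        using True inU True2 rpU x by (simp add: bender_knuth_def)
      also have "\<dots> = T x" using less_iff_row_count_less[OF T, of r c "Suc i"] True x True2 by auto
      finally show ?thesis .
    next
      case False
      then show ?thesis using True inU by (simp add: bender_knuth_def)
    qed
  qed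
qed

lemma kostka_swap_adj:
  assumes P: "is_partition la"
  shows "kostka la (e \<circ> swap_adj i) = kostka la e"
proof -
  have "bij_betw (bender_knuth la i) (ssyt la e) (ssyt la (e \<circ> swap_adj i))"
  proof (rule bij_betw_byWitness[where f' = "bender_knuth la i"])
    show "\<forall>a\<in>ssyt la e. bender_knuth la i (bender_knuth la i a) = a"
      using bender_knuth_bender_knuth[OF P] by blast
    show "\<forall>a'\<in>ssyt la (e \<circ> swap_adj i). bender_knuth la i (bender_knuth la i a') = a'"
      using bender_knuth_bender_knuth[OF P] by blast
    show "bender_knuth la i ` ssyt la e \<subseteq> ssyt la (e \<circ> swap_adj i)"
      using bender_knuth_ssyt[OF P] by blast
    show "bender_knuth la i ` ssyt la (e \<circ> swap_adj i) \<subseteq> ssyt la e"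
      using bender_knuth_ssyt[OF P, of _ "e \<circ> swap_adj i" i] unfolding comp_swap_adj_swap_adj by auto
  qed
  then show ?thesis unfolding kostka_def by (simp add: bij_betw_same_card)
qed

lemma kostka_transpose_less:
  assumes P: "is_partition la" and "a < b"
  shows "kostka la (e \<circ> Transposition.transpose a b) = kostka la e"
  using assms(2)
proof (induction b arbitrary: e rule: less_induct)
  case (less b)
  show ?case
  proof (cases "b = Suc a")
    case True
    have "Transposition.transpose a b = swap_adj a" using True
      by (auto simp: fun_eq_iff swap_adj_def Transposition.transpose_def)
    then have "e \<circ> Transposition.transpose a b = e \<circ> swap_adj a" by simp
    then show ?thesis using kostka_swap_adj[OF P, of e a] by (simp only:)
  next
    case False
    then obtain b' where b: "b = Suc b'" "a < b'" using less(2) by (cases b) auto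
    have "Transposition.transpose a b = swap_adj b' \<circ> Transposition.transpose a b' \<circ> swap_adj b'"
      using b by (auto simp: fun_eq_iff swap_adj_def Transposition.transpose_def)
    then have "e \<circ> Transposition.transpose a b
        = ((e \<circ> swap_adj b') \<circ> Transposition.transpose a b') \<circ> swap_adj b'"
      by (simp add: comp_assoc)
    then have "kostka la (e \<circ> Transposition.transpose a b)
        = kostka la (((e \<circ> swap_adj b') \<circ> Transposition.transpose a b') \<circ> swap_adj b')"
      by (simp only:)
    also have "\<dots> = kostka la ((e \<circ> swap_adj b') \<circ> Transposition.transpose a b')"
      by (rule kostka_swap_adj[OF P])
    also have "\<dots> = kostka la (e \<circ> swap_adj b')"
      using less(1)[of b' "e \<circ> swap_adj b'"] b by (simp only: lessI)
    also have "\<dots> = kostka la e" by (rule kostka_swap_adj[OF P])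
    finally show ?thesis .
  qed
qed

lemma kostka_transpose:
  assumes P: "is_partition la"
  shows "kostka la (e \<circ> Transposition.transpose a b) = kostka la e"
proof -
  consider "a = b" | "a < b" | "b < a" by linarith
  then show ?thesis
  proof cases
    case 1 then show ?thesis by simp
  next
    case 2 then show ?thesis using kostka_transpose_less[OF P] by blast
  next
    case 3 then show ?thesis using kostka_transpose_less[OF P 3] by (simp add: transpose_commute)
  qed
qed

lemma kostka_permutes:
  assumes P: "is_partition la" and p: "p permutes {..<N}"
  shows "kostka la (e \<circ> p) = kostka la e"
proof -
  have "\<forall>e::nat\<Rightarrow>nat. kostka la (e \<circ> p) = kostka la e"
    using p finite_lessThan
  proof (induction rule: permutes_induct)
    case id then show ?case by simp
  next
    case (swap a b p)
    show ?case
    proof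
      fix e :: "nat \<Rightarrow> nat"
      have "e \<circ> (Transposition.transpose a b \<circ> p) = (e \<circ> Transposition.transpose a b) \<circ> p"
        by (simp add: comp_assoc)
      moreover have "kostka la ((e \<circ> Transposition.transpose a b) \<circ> p)
          = kostka la (e \<circ> Transposition.transpose a b)"
        using swap by blast
      ultimately show "kostka la (e \<circ> (Transposition.transpose a b \<circ> p)) = kostka la e"
        using kostka_transpose[OF P, of e a b] by simp
    qed
  qed
  then show ?thesis by blast
qed


section \<open>Existence and uniqueness of Schur expansions\<close>

lemma length_le_sum_pos: "\<forall>x\<in>set xs. (0::nat) < x \<Longrightarrow> length xs \<le> sum_list xs"
  by (induction xs) auto

lemma list_eq_if_prefix_sums_eq:
  "(\<forall>j. sum_list (take j xs) = sum_list (take j (ys::nat list))) \<Longrightarrow>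
    \<forall>x\<in>set xs. 0 < x \<Longrightarrow> \<forall>y\<in>set ys. 0 < y \<Longrightarrow> xs = ys"
proof (induction xs arbitrary: ys)
  case Nil
  then show ?case
  proof (cases ys)
    case (Cons y ys')
    then show ?thesis using Nil(1)[rule_format, of 1] Nil(3) by simp
  qed simp
next
  case (Cons x xs)
  note IH = Cons.IH and pr = Cons.prems
  show ?case
  proof (cases ys)
    case Nil
    then show ?thesis using pr(1)[rule_format, of 1] pr(2) by simp
  next
    case (Cons y ys')
    have xy: "x = y" using pr(1)[rule_format, of 1] Cons by simp
    have "\<forall>j. sum_list (take j xs) = sum_list (take j ys')"
    proof
      fix j show "sum_list (take j xs) = sum_list (take j ys')"
        using pr(1)[rule_format, of "Suc j"] Cons xy by simp
    qed
    then have "xs = ys'" using IH pr(2,3) Cons by simp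
    then show ?thesis using xy Cons by simp
  qed
qed

text \<open>A numerical linear extension of the dominance order; the Kostka matrix is unitriangular along it.\<close>

definition dominance_rank :: "nat \<Rightarrow> nat list \<Rightarrow> nat" where
  "dominance_rank n la = (\<Sum>j<Suc n. sum_list (take j la))"

lemma partition_of_length_le: "la \<in> partitions_of n \<Longrightarrow> length la \<le> n"
  unfolding partitions_of_def is_partition_def using length_le_sum_pos by auto

lemma finite_partitions: "finite (partitions_of n)"
proof -
  have "partitions_of n \<subseteq> {xs. set xs \<subseteq> {..n} \<and> length xs \<le> n}"
  proof
    fix la assume la: "la \<in> partitions_of n"
    have "x \<le> n" if "x \<in> set la" for x
      using member_le_sum_list[OF that] la by (simp add: partitions_of_def)
    then show "la \<in> {xs. set xs \<subseteq> {..n} \<and> length xs \<le> n}"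
      using partition_of_length_le[OF la] by auto
  qed
  moreover have "finite {xs. set xs \<subseteq> {..n} \<and> length xs \<le> n}"
    by (rule finite_lists_length_le) auto
  ultimately show ?thesis by (rule finite_subset)
qed

lemma dominance_rank_kostka:
  assumes la: "la \<in> partitions_of n" and mu: "mu \<in> partitions_of n"
    and K: "kostka mu (partition_exp la) \<noteq> 0"
  shows "dominance_rank n la \<le> dominance_rank n mu"
    "dominance_rank n la = dominance_rank n mu \<Longrightarrow> la = mu"
proof -
  have pmu: "is_partition mu" using mu by (simp add: partitions_of_def)
  have le: "sum_list (take j la) \<le> sum_list (take j mu)" for j
    using kostka_nonzero_dominates[OF pmu K] .
  show "dominance_rank n la \<le> dominance_rank n mu" unfolding dominance_rank_def
    by (intro sum_mono le)
  assume eq: "dominance_rank n la = dominance_rank n mu"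
  have "\<forall>j. sum_list (take j la) = sum_list (take j mu)"
  proof
    fix j
    show "sum_list (take j la) = sum_list (take j mu)"
    proof (cases "j < Suc n")
      case True
      show ?thesis
      proof (rule ccontr)
        assume "sum_list (take j la) \<noteq> sum_list (take j mu)"
        then have "sum_list (take j la) < sum_list (take j mu)" using le[of j] by simp
        then have "dominance_rank n la < dominance_rank n mu" unfolding dominance_rank_def
          using True le by (intro sum_strict_mono_ex1) auto
        then show False using eq by simp
      qed
    next
      case False
      then have "take j la = la" "take j mu = mu"
        using partition_of_length_le[OF la] partition_of_length_le[OF mu] by auto
      then show ?thesis using la mu by (simp add: partitions_of_def)
    qed
  qed
  then show "la = mu"
    using list_eq_if_prefix_sums_eq la mu by (auto simp: partitions_of_def is_partition_def)
qed

definition kostka_upclosed :: "nat \<Rightarrow> nat list set \<Rightarrow> bool" where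
  "kostka_upclosed n A \<longleftrightarrow>
     (\<forall>la\<in>A. \<forall>mu\<in>partitions_of n. kostka mu (partition_exp la) \<noteq> 0 \<longrightarrow> mu \<in> A)"

lemma kostka_upclosed_remove_min:
  assumes A: "A \<subseteq> partitions_of n" "kostka_upclosed n A" and la0: "la0 \<in> A"
    and min: "\<And>la. la \<in> A \<Longrightarrow> dominance_rank n la0 \<le> dominance_rank n la"
  shows "\<And>la. la \<in> A - {la0} \<Longrightarrow> kostka la0 (partition_exp la) = 0"
    and "kostka_upclosed n (A - {la0})"
proof -
  show K0: "kostka la0 (partition_exp la) = 0" if la: "la \<in> A - {la0}" for la
  proof (rule ccontr)
    assume "kostka la0 (partition_exp la) \<noteq> 0"
    moreover have "la \<in> partitions_of n" "la0 \<in> partitions_of n" using la la0 A(1) by auto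
    ultimately have "dominance_rank n la \<le> dominance_rank n la0"
      "dominance_rank n la = dominance_rank n la0 \<Longrightarrow> la = la0"
      using dominance_rank_kostka by blast+
    then show False using min[of la] la by auto
  qed
  show "kostka_upclosed n (A - {la0})"
    using A(2) K0 unfolding kostka_upclosed_def by fastforce
qed

lemma sum_fun_upd_mult:
  fixes c :: "'a \<Rightarrow> 'b :: comm_ring"
  assumes "finite A" "x \<in> A"
  shows "(\<Sum>y\<in>A. (c(x := v)) y * K y) = (\<Sum>y\<in>A. c y * K y) + (v - c x) * K x"
proof -
  have "(\<Sum>y\<in>A. (c(x := v)) y * K y) = v * K x + (\<Sum>y\<in>A - {x}. c y * K y)"
    using assms by (simp add: sum.remove)
  moreover have "(\<Sum>y\<in>A. c y * K y) = c x * K x + (\<Sum>y\<in>A - {x}. c y * K y)"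
    using assms by (simp add: sum.remove)
  ultimately show ?thesis by (simp add: algebra_simps)
qed

text \<open>Solve for the coefficients one partition at a time, in order of increasing dominance rank.\<close>

lemma kostka_triangular_solve:
  fixes f :: symfun
  assumes "A \<subseteq> partitions_of n" "kostka_upclosed n A"
  shows "\<exists>c. (\<forall>mu. mu \<notin> A \<longrightarrow> c mu = 0) \<and>
     (\<forall>la\<in>A. f (partition_exp la) = (\<Sum>mu\<in>partitions_of n. c mu * kostka mu (partition_exp la)))"
  using assms
proof (induction "card A" arbitrary: A rule: less_induct)
  case less
  show ?case
  proof (cases "A = {}")
    case True
    then show ?thesis by (intro exI[of _ "\<lambda>_. 0"]) auto
  next
    case False
    have finA: "finite A" using less(2) finite_partitions finite_subset by blast
    obtain la0 where "la0 \<in> A" "dominance_rank n la0 = Min (dominance_rank n ` A)"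
      using False finA by (metis (mono_tags, lifting) Min_in finite_imageI image_iff image_is_empty)
    then have la0: "la0 \<in> A" "\<And>la. la \<in> A \<Longrightarrow> dominance_rank n la0 \<le> dominance_rank n la"
      using finA by simp_all
    have la0P: "la0 \<in> partitions_of n" using la0 less(2) by blast
    note K0 = kostka_upclosed_remove_min(1)[OF less(2,3) la0]
    have "card (A - {la0}) < card A" using la0(1) finA by (rule card_Diff1_less[rotated])
    then obtain c' where c': "\<forall>mu. mu \<notin> A - {la0} \<longrightarrow> c' mu = 0"
      "\<forall>la\<in>A - {la0}. f (partition_exp la)
          = (\<Sum>mu\<in>partitions_of n. c' mu * kostka mu (partition_exp la))"
      using less(1)[of "A - {la0}"] less(2) kostka_upclosed_remove_min(2)[OF less(2,3) la0] by blast
    define v where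
      "v = f (partition_exp la0) - (\<Sum>mu\<in>partitions_of n. c' mu * kostka mu (partition_exp la0))"
    define c where "c = c'(la0 := v)"
    have "c' la0 = 0" using c' by simp
    then have sum_c: "(\<Sum>mu\<in>partitions_of n. c mu * kostka mu (partition_exp la))
        = (\<Sum>mu\<in>partitions_of n. c' mu * kostka mu (partition_exp la))
          + v * kostka la0 (partition_exp la)" for la
      using sum_fun_upd_mult[OF finite_partitions la0P, of c' v] unfolding c_def by simp
    show ?thesis
    proof (intro exI[of _ c] conjI allI impI ballI)
      fix mu assume "mu \<notin> A" then show "c mu = 0" using c' la0 by (auto simp: c_def)
    next
      fix la assume la: "la \<in> A"
      show "f (partition_exp la) = (\<Sum>mu\<in>partitions_of n. c mu * kostka mu (partition_exp la))"
      proof (cases "la = la0")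
        case True
        have "kostka la0 (partition_exp la0) = 1"
          using la0P kostka_diagonal by (simp add: partitions_of_def)
        then show ?thesis using True sum_c[of la0] by (simp add: v_def)
      next
        case False
        then show ?thesis using sum_c[of la] K0[of la] c' la by simp
      qed
    qed
  qed
qed

lemma partition_takeWhile_pos:
  assumes "sorted_wrt (\<ge>) ys"
  shows "is_partition (takeWhile (\<lambda>x. 0 < x) ys)"
  using assms sorted_wrt_append[of "(\<ge>)" "takeWhile (\<lambda>x. 0 < x) ys" "dropWhile (\<lambda>x. 0 < x) ys"]
  unfolding is_partition_def by (auto dest: set_takeWhileD)

lemma nth_eq_partition_exp_takeWhile_pos:
  assumes sorted: "sorted_wrt (\<ge>) ys" and k: "k < length (ys :: nat list)"
  shows "ys ! k = partition_exp (takeWhile (\<lambda>x. 0 < x) ys) k"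
proof -
  define la where "la = takeWhile (\<lambda>x. 0 < x) ys"
  define d where "d = dropWhile (\<lambda>x. 0 < x) ys"
  have ys: "ys = la @ d" by (simp add: la_def d_def)
  have d0: "\<forall>y\<in>set d. y = 0"
  proof (cases d)
    case (Cons z zs)
    have "\<not> 0 < z" using Cons hd_dropWhile[of "\<lambda>x. 0 < x" ys] unfolding d_def
      by (metis list.distinct(1) list.sel(1))
    moreover have "sorted_wrt (\<ge>) d" using sorted unfolding ys by (simp add: sorted_wrt_append)
    ultimately show ?thesis using Cons by auto
  qed simp
  have "ys ! k = partition_exp la k"
  proof (cases "k < length la")
    case True then show ?thesis by (simp add: ys nth_append partition_exp_def)
  next
    case False
    then have "ys ! k = d ! (k - length la)" "k - length la < length d"
      using k by (simp_all add: ys nth_append)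
    then show ?thesis using d0 False by (simp add: partition_exp_def)
  qed
  then show ?thesis by (simp add: la_def)
qed

lemma permutes_to_partition_exp:
  assumes "fin_supp e"
  obtains N p la where "p permutes {..<N}" "is_partition la" "e \<circ> p = partition_exp la"
proof -
  obtain N where N: "{i. e i \<noteq> 0} \<subseteq> {..<N}"
  proof -
    have "finite {i. e i \<noteq> 0}" using assms unfolding fin_supp_def .
    then have "{i. e i \<noteq> 0} \<subseteq> {..<Suc (Max {i. e i \<noteq> 0})}"
      by (auto simp: less_Suc_eq_le)
    then show ?thesis using that by blast
  qed
  define xs where "xs = map e [0..<N]"
  define ys where "ys = rev (sort xs)"
  define la where "la = takeWhile (\<lambda>x. 0 < x) ys"
  have len: "length ys = N" "length xs = N" by (auto simp: ys_def xs_def)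
  obtain p where p: "p permutes {..<length xs}" "permute_list p xs = ys"
    using mset_eq_permutation[of ys xs] by (metis ys_def mset_rev mset_sort)
  have sorted: "sorted_wrt (\<ge>) ys" unfolding ys_def sorted_wrt_rev
    using sorted_sort[of xs] by (simp add: sorted_wrt_iff_nth_less)
  have "e \<circ> p = partition_exp la"
  proof
    fix k
    show "(e \<circ> p) k = partition_exp la k"
    proof (cases "k < N")
      case True
      have "ys ! k = xs ! p k" using p True len permute_list_nth by metis
      moreover have "p k < N" using permutes_in_image[OF p(1)] True len by simp
      ultimately show ?thesis
        using nth_eq_partition_exp_takeWhile_pos[OF sorted, of k] True len
        by (simp add: xs_def la_def)
    next
      case False
      then have "p k = k" using p(1) len by (simp add: permutes_not_in)
      moreover have "e k = 0" using N False by auto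
      moreover have "length la \<le> N" using len unfolding la_def by (metis length_takeWhile_le)
      ultimately show ?thesis using False by (simp add: partition_exp_def)
    qed
  qed
  then show ?thesis using that p(1) len partition_takeWhile_pos[OF sorted] unfolding la_def by metis
qed

definition symmetric_symfun :: "symfun \<Rightarrow> bool" where
  "symmetric_symfun f \<longleftrightarrow> (\<forall>N p e. p permutes {..<N} \<longrightarrow> f (e \<circ> p) = f e)"

text \<open>Tested on partition exponents only, which suffices for symmetric f.\<close>

definition homogeneous :: "nat \<Rightarrow> symfun \<Rightarrow> bool" where
  "homogeneous n f \<longleftrightarrow> (\<forall>la. is_partition la \<longrightarrow> sum_list la \<noteq> n \<longrightarrow> f (partition_exp la) = 0)"

lemma schur_exists:
  assumes sym: "symmetric_symfun f" and hom: "homogeneous n f"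
  shows "\<exists>c. schur_expansion n f c"
proof -
  have "kostka_upclosed n (partitions_of n)" by (simp add: kostka_upclosed_def)
  then obtain c where c: "\<forall>mu. mu \<notin> partitions_of n \<longrightarrow> c mu = 0"
     "\<forall>la\<in>partitions_of n. f (partition_exp la)
         = (\<Sum>mu\<in>partitions_of n. c mu * kostka mu (partition_exp la))"
    using kostka_triangular_solve[of "partitions_of n" n f] by blast
  have "f e = (\<Sum>la\<in>partitions_of n. c la * kostka la e)" if fs: "fin_supp e" for e
  proof -
    obtain N p la where p: "p permutes {..<N}" "is_partition la" "e \<circ> p = partition_exp la"
      using permutes_to_partition_exp[OF fs] by blast
    have fe: "f e = f (partition_exp la)" using sym p unfolding symmetric_symfun_def by metis
    have Ke: "kostka mu e = kostka mu (partition_exp la)" if "mu \<in> partitions_of n" for mu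
      using kostka_permutes[of mu p N e] that p by (simp add: partitions_of_def)
    show ?thesis
    proof (cases "la \<in> partitions_of n")
      case True
      then show ?thesis using c(2) fe Ke by simp
    next
      case False
      then have s: "sum_list la \<noteq> n" using p(2) by (simp add: partitions_of_def)
      then have "f (partition_exp la) = 0" using hom p(2) unfolding homogeneous_def by blast
      moreover have "kostka mu (partition_exp la) = 0" if "mu \<in> partitions_of n" for mu
        using kostka_nonzero_sum_eq[of mu la] that s by (auto simp: partitions_of_def)
      ultimately show ?thesis using fe Ke by simp
    qed
  qed
  then show ?thesis unfolding schur_expansion_def using c(1) by blast
qed

lemma kostka_rows_independent:
  fixes d :: "nat list \<Rightarrow> int"
  assumes dsum: "\<And>la. (\<Sum>mu\<in>partitions_of n. d mu * kostka mu (partition_exp la)) = 0"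
  shows "\<forall>mu\<in>partitions_of n. d mu = 0"
proof (rule ccontr)
  define S where "S = {mu \<in> partitions_of n. d mu \<noteq> 0}"
  assume "\<not> (\<forall>mu\<in>partitions_of n. d mu = 0)"
  then have "S \<noteq> {}" by (auto simp: S_def)
  moreover have finS: "finite S" unfolding S_def using finite_partitions by simp
  ultimately obtain la0 where la0: "la0 \<in> S" "dominance_rank n la0 = Max (dominance_rank n ` S)"
    by (metis (mono_tags, lifting) Max_in finite_imageI image_iff image_is_empty)
  have la0P: "la0 \<in> partitions_of n" using la0 by (simp add: S_def)
  have rest: "(\<Sum>mu\<in>partitions_of n - {la0}. d mu * kostka mu (partition_exp la0)) = 0"
  proof (rule sum.neutral, rule ballI)
    fix mu assume mu: "mu \<in> partitions_of n - {la0}"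
    show "d mu * kostka mu (partition_exp la0) = 0"
    proof (rule ccontr)
      assume "d mu * kostka mu (partition_exp la0) \<noteq> 0"
      then have "mu \<in> S" and K: "kostka mu (partition_exp la0) \<noteq> 0" using mu by (auto simp: S_def)
      then have "dominance_rank n mu \<le> dominance_rank n la0" using la0(2) finS by simp
      then show False using dominance_rank_kostka[OF la0P _ K] mu by auto
    qed
  qed
  have "(\<Sum>mu\<in>partitions_of n. d mu * kostka mu (partition_exp la0))
      = d la0 * kostka la0 (partition_exp la0)
        + (\<Sum>mu\<in>partitions_of n - {la0}. d mu * kostka mu (partition_exp la0))"
    using la0P finite_partitions by (simp add: sum.remove)
  then have "d la0 * kostka la0 (partition_exp la0) = 0" using rest dsum[of la0] by simp
  moreover have "kostka la0 (partition_exp la0) = 1"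
    using la0P kostka_diagonal by (simp add: partitions_of_def)
  ultimately show False using la0 by (simp add: S_def)
qed

lemma schur_unique:
  assumes c1: "schur_expansion n f c1" and c2: "schur_expansion n f c2"
  shows "c1 = c2"
proof
  fix mu
  have "(\<Sum>mu\<in>partitions_of n. (c1 mu - c2 mu) * kostka mu (partition_exp la)) = 0" for la
  proof -
    have "f (partition_exp la) = (\<Sum>mu\<in>partitions_of n. c1 mu * kostka mu (partition_exp la))"
         "f (partition_exp la) = (\<Sum>mu\<in>partitions_of n. c2 mu * kostka mu (partition_exp la))"
      using c1 c2 fin_supp_partition_exp unfolding schur_expansion_def by auto
    then show ?thesis by (simp add: left_diff_distrib sum_subtractf)
  qed
  from kostka_rows_independent[OF this] show "c1 mu = c2 mu"
    using c1 c2 unfolding schur_expansion_def by (cases "mu \<in> partitions_of n") auto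
qed

lemma schur_coeff_expansion:
  assumes "symmetric_symfun f" "homogeneous n f"
  shows "schur_expansion n f (schur_coeff n f)"
proof -
  have "\<exists>!c. schur_expansion n f c" using schur_exists[OF assms] schur_unique by blast
  then show ?thesis unfolding schur_coeff_def by (rule theI')
qed


section \<open>Two-row Schur coefficients\<close>

definition two_row_exp :: "nat \<Rightarrow> nat \<Rightarrow> nat \<Rightarrow> nat" where
  "two_row_exp n k = (\<lambda>i. if i = 0 then n - k else if i = 1 then k else 0)"

text \<open>The shape (n - j, j), written [n] when j = 0 because parts of partitions are positive.\<close>

definition two_row_partition :: "nat \<Rightarrow> nat \<Rightarrow> nat list" where
  "two_row_partition n j = (if j = 0 then [n] else [n - j, j])"

lemma fin_supp_two_row_exp: "fin_supp (two_row_exp n k)"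
  unfolding fin_supp_def two_row_exp_def by (rule finite_subset[of _ "{..<2}"]) auto

lemma young_diagram_one_row: "young_diagram [n] = young_diagram [n, 0]"
  by (auto simp: young_diagram_def less_Suc_eq nth_Cons split: nat.splits)

lemma kostka_one_row: "kostka [n] e = kostka [n, 0] e"
  unfolding kostka_def ssyt_def young_diagram_one_row ..

lemma young_diagram_two_rows_iff:
  "(r, c) \<in> young_diagram [a, b] \<longleftrightarrow> (r = 0 \<and> c < a) \<or> (r = 1 \<and> c < b)"
  by (auto simp: young_diagram_def less_Suc_eq)

lemma ssyt_content_pos:
  assumes T: "T \<in> ssyt la e" and x: "x \<in> young_diagram la"
  shows "0 < e (T x)"
proof -
  have "x \<in> {c \<in> young_diagram la. T c = T x}" using x by simp
  then have "{c \<in> young_diagram la. T c = T x} \<noteq> {}" by blast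
  then have "card {c \<in> young_diagram la. T c = T x} \<noteq> 0" by simp
  then show ?thesis using ssytD(4)[OF T] by simp
qed

lemma ssyt_two_row_exp_le1:
  assumes T: "T \<in> ssyt la (two_row_exp n k)" and x: "x \<in> young_diagram la"
  shows "T x \<le> 1"
  using ssyt_content_pos[OF T x] by (auto simp: two_row_exp_def split: if_splits)

lemma ssyt_two_row_exp_second_row:
  assumes T: "T \<in> ssyt [a, b] (two_row_exp n k)" and c: "c < b"
  shows "T (1, c) = 1"
proof -
  have x: "(1, c) \<in> young_diagram [a, b]" using c by (simp add: young_diagram_two_rows_iff)
  then have "T (0, c) < T (Suc 0, c)" using ssytD(3)[OF T, of 0 c] by simp
  then show ?thesis using ssyt_two_row_exp_le1[OF T x] by simp
qed

lemma ssyt_two_row_exp_zeros: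
  assumes T: "T \<in> ssyt [a, b] (two_row_exp n k)"
  shows "{c. c < a \<and> T (0, c) = 0} = {..<n - k}"
proof -
  define Z where "Z = {c. c < a \<and> T (0, c) = 0}"
  have finZ: "finite Z" unfolding Z_def by (rule finite_subset[of _ "{..<a}"]) auto
  have "{x \<in> young_diagram [a, b]. T x = 0} = Pair (0::nat) ` Z"
    using ssyt_two_row_exp_second_row[OF T] by (force simp: Z_def young_diagram_two_rows_iff)
  moreover have "card (Pair (0::nat) ` Z) = card Z" by (simp add: card_image inj_on_def)
  moreover have "card {x \<in> young_diagram [a, b]. T x = 0} = n - k"
    using ssytD(4)[OF T, of 0] by (simp add: two_row_exp_def)
  ultimately have "card Z = n - k" by simp
  moreover have "Z = {..<card Z}"
  proof (rule downward_closed_eq_lessThan[OF finZ])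
    fix c c' assume "c \<in> Z" "c' \<le> c"
    then have "c < a" "T (0, c) = 0" by (auto simp: Z_def)
    moreover from this have "T (0, c') \<le> T (0, c)"
      using ssyt_row_mono[OF T, of 0 c c'] \<open>c' \<le> c\<close> by (simp add: young_diagram_two_rows_iff)
    ultimately show "c' \<in> Z" using \<open>c' \<le> c\<close> by (simp add: Z_def)
  qed
  ultimately show ?thesis by (simp add: Z_def)
qed

definition two_row_tableau :: "nat \<Rightarrow> nat \<Rightarrow> nat \<Rightarrow> nat \<Rightarrow> nat \<times> nat \<Rightarrow> nat" where
  "two_row_tableau a b n k x = (if x \<in> young_diagram [a, b] then
      (if fst x = 0 \<and> snd x < n - k then 0 else 1) else undefined)"

lemma two_row_tableau_ssyt:
  assumes ab: "a + b = n" "b \<le> a" and k: "2 * k \<le> n" "b \<le> k"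
  shows "two_row_tableau a b n k \<in> ssyt [a, b] (two_row_exp n k)"
  (is "?T \<in> _")
  unfolding ssyt_def
proof (intro CollectI conjI allI impI)
  show "?T \<in> young_diagram [a, b] \<rightarrow>\<^sub>E UNIV"
    by (auto simp: two_row_tableau_def PiE_def extensional_def)
next
  fix i j assume "(i, Suc j) \<in> young_diagram [a, b]"
  then show "?T (i, j) \<le> ?T (i, Suc j)"
    by (auto simp: two_row_tableau_def young_diagram_two_rows_iff)
next
  fix i j assume "(Suc i, j) \<in> young_diagram [a, b]"
  then show "?T (i, j) < ?T (Suc i, j)"
    using ab k by (auto simp: two_row_tableau_def young_diagram_two_rows_iff)
next
  fix v
  show "card {c \<in> young_diagram [a, b]. ?T c = v} = two_row_exp n k v"
  proof -
    have Z: "{c \<in> young_diagram [a, b]. ?T c = 0} = Pair (0::nat) ` {..<n - k}"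
      using k ab by (auto simp: two_row_tableau_def young_diagram_two_rows_iff)
    have O: "{c \<in> young_diagram [a, b]. ?T c = 1} = Pair (0::nat) ` {n - k..<a}
        \<union> Pair (1::nat) ` {..<b}"
      using k ab by (auto simp: two_row_tableau_def young_diagram_two_rows_iff)
    have "card (Pair (0::nat) ` {n - k..<a} \<union> Pair (1::nat) ` {..<b})
        = card (Pair (0::nat) ` {n - k..<a}) + card (Pair (1::nat) ` {..<b})"
      by (rule card_Un_disjoint) auto
    also have "\<dots> = (a - (n - k)) + b" by (simp add: card_image inj_on_def)
    finally have c1: "card {c \<in> young_diagram [a, b]. ?T c = 1} = k" using O k ab by simp
    have c0: "card {c \<in> young_diagram [a, b]. ?T c = 0} = n - k"
      using Z by (simp add: card_image inj_on_def)
    have "{c \<in> young_diagram [a, b]. ?T c = v} = {}" if "v \<ge> 2"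
      using that by (auto simp: two_row_tableau_def)
    then show ?thesis using c0 c1 by (cases "v = 0"; cases "v = 1") (auto simp: two_row_exp_def)
  qed
qed

lemma ssyt_two_row_exp_unique:
  assumes T: "T \<in> ssyt [a, b] (two_row_exp n k)"
  shows "T = two_row_tableau a b n k"
proof
  fix x
  show "T x = two_row_tableau a b n k x"
  proof (cases "x \<in> young_diagram [a, b]")
    case False then show ?thesis
      using ssyt_undefined_outside[OF T False] by (simp add: two_row_tableau_def)
  next
    case True
    obtain r c where rc: "x = (r, c)" by force
    show ?thesis
    proof (cases "r = 0")
      case r0: True
      then have "(0, c) \<in> young_diagram [a, b]" "c < a"
        using True rc by (simp_all add: young_diagram_two_rows_iff)
      moreover from this have "T (0, c) = 0 \<longleftrightarrow> c < n - k" using ssyt_two_row_exp_zeros[OF T] by blast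
      ultimately show ?thesis using ssyt_two_row_exp_le1[OF T] r0 rc True
        by (fastforce simp: two_row_tableau_def)
    next
      case False
      then have "r = 1" "c < b" using True rc by (auto simp: young_diagram_two_rows_iff)
      then show ?thesis
        using ssyt_two_row_exp_second_row[OF T] rc True by (simp add: two_row_tableau_def)
    qed
  qed
qed

lemma kostka_two_row:
  assumes ab: "a + b = n" "b \<le> a" and k: "2 * k \<le> n"
  shows "kostka [a, b] (two_row_exp n k) = (if b \<le> k then 1 else 0)"
proof (cases "b \<le> k")
  case False
  have "ssyt [a, b] (two_row_exp n k) = {}"
  proof (rule ccontr)
    assume "ssyt [a, b] (two_row_exp n k) \<noteq> {}"
    then obtain T where T: "T \<in> ssyt [a, b] (two_row_exp n k)" by blast
    have "{c. c < a \<and> T (0, c) = 0} \<subseteq> {..<a}" by auto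
    then have "card {..<n - k} \<le> card {..<a}"
      using ssyt_two_row_exp_zeros[OF T] by (metis card_mono finite_lessThan)
    then show False using False ab by simp
  qed
  then show ?thesis using False by (simp add: kostka_def)
next
  case True
  have "ssyt [a, b] (two_row_exp n k) = {two_row_tableau a b n k}"
    using two_row_tableau_ssyt[OF ab k True] ssyt_two_row_exp_unique by blast
  then show ?thesis using True by (simp add: kostka_def)
qed

lemma kostka_two_row_exp_long:
  assumes P: "is_partition la" and l: "3 \<le> length la"
  shows "kostka la (two_row_exp n k) = 0"
proof -
  have "ssyt la (two_row_exp n k) = {}"
  proof (rule ccontr)
    assume "ssyt la (two_row_exp n k) \<noteq> {}"
    then obtain T where T: "T \<in> ssyt la (two_row_exp n k)" by blast
    have x: "(2, 0) \<in> young_diagram la"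
      using partition_nth_pos[OF P, of 2] l by (simp add: young_diagram_iff)
    have "2 \<le> T (2, 0)" using ssyt_row_le_entry[OF P T x] by simp
    moreover have "0 < two_row_exp n k (T (2, 0))" using ssyt_content_pos[OF T x] .
    ultimately show False by (simp add: two_row_exp_def)
  qed
  then show ?thesis by (simp add: kostka_def)
qed

lemma partition_length_le2:
  assumes la: "la \<in> partitions_of n" and l: "length la \<le> 2" and n: "1 \<le> n"
  shows "\<exists>j. 2 * j \<le> n \<and> la = two_row_partition n j"
proof -
  have P: "is_partition la" "sum_list la = n" using la by (auto simp: partitions_of_def)
  consider "la = []" | x where "la = [x]" | x y where "la = [x, y]"
    using l by (cases la; cases "tl la") auto
  then show ?thesis
  proof cases
    case 1 then show ?thesis using P n by simp
  next
    case 2 then show ?thesis using P by (intro exI[of _ 0]) (simp add: two_row_partition_def)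
  next
    case 3
    then have "y \<le> x" "0 < y" using P(1) by (auto simp: is_partition_def)
    then show ?thesis using 3 P by (intro exI[of _ y]) (auto simp: two_row_partition_def)
  qed
qed

lemma two_row_partition_of:
  assumes "2 * j \<le> n" "1 \<le> n"
  shows "two_row_partition n j \<in> partitions_of n"
  using assms by (auto simp: two_row_partition_def partitions_of_def is_partition_def)

lemma two_row_partition_inj: "two_row_partition n i = two_row_partition n j \<Longrightarrow> i = j"
  by (auto simp: two_row_partition_def split: if_splits)

lemma kostka_two_row_exp:
  assumes la: "la \<in> partitions_of n" and k: "2 * k \<le> n" and n: "1 \<le> n"
  shows "kostka la (two_row_exp n k) = (if la \<in> two_row_partition n ` {..k} then 1 else 0)"
proof (cases "length la \<le> 2")
  case False
  then have "la \<notin> two_row_partition n ` {..k}" by (auto simp: two_row_partition_def)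
  then show ?thesis
    using kostka_two_row_exp_long[of la n k] la False by (simp add: partitions_of_def)
next
  case True
  obtain j where j: "2 * j \<le> n" "la = two_row_partition n j"
    using partition_length_le2[OF la True n] by blast
  have "la \<in> two_row_partition n ` {..k} \<longleftrightarrow> j \<le> k" using j two_row_partition_inj by auto
  moreover have "kostka la (two_row_exp n k) = (if j \<le> k then 1 else 0)"
  proof (cases "j = 0")
    case True
    then show ?thesis
      using j kostka_two_row[of n 0 n k] k by (simp add: two_row_partition_def kostka_one_row)
  next
    case False
    then show ?thesis
      using j kostka_two_row[of "n - j" j n k] k by (simp add: two_row_partition_def)
  qed
  ultimately show ?thesis by simp
qed

lemma schur_expansion_two_row_exp:
  assumes c: "schur_expansion n f c" and k: "2 * k \<le> n" and n: "1 \<le> n"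
  shows "f (two_row_exp n k) = (\<Sum>j\<le>k. c (two_row_partition n j))"
proof -
  have "f (two_row_exp n k) = (\<Sum>la\<in>partitions_of n. c la * kostka la (two_row_exp n k))"
    using c fin_supp_two_row_exp unfolding schur_expansion_def by blast
  also have "\<dots> = (\<Sum>la\<in>partitions_of n. if la \<in> two_row_partition n ` {..k} then c la else 0)"
    using kostka_two_row_exp[OF _ k n] by (intro sum.cong) auto
  also have "\<dots> = (\<Sum>la\<in>two_row_partition n ` {..k}. c la)"
  proof -
    have sub: "two_row_partition n ` {..k} \<subseteq> partitions_of n" using two_row_partition_of k n by auto
    have "(\<Sum>la\<in>partitions_of n. if la \<in> two_row_partition n ` {..k} then c la else 0)
        = (\<Sum>la\<in>partitions_of n \<inter> two_row_partition n ` {..k}. c la)"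
      by (simp add: sum.inter_restrict finite_partitions)
    also have "partitions_of n \<inter> two_row_partition n ` {..k} = two_row_partition n ` {..k}"
      using sub by blast
    finally show ?thesis .
  qed
  also have "\<dots> = (\<Sum>j\<le>k. c (two_row_partition n j))"
    by (rule sum.reindex_cong[where l = "two_row_partition n"])
      (auto simp: inj_on_def two_row_partition_inj)
  finally show ?thesis .
qed

lemma schur_coeff_two_row:
  assumes c: "schur_expansion n f c" and n: "1 \<le> n"
  shows "c (two_row_partition n 0) = f (two_row_exp n 0)"
    "1 \<le> k \<Longrightarrow> 2 * k \<le> n \<Longrightarrow> c (two_row_partition n k)
        = f (two_row_exp n k) - f (two_row_exp n (k - 1))"
proof -
  show "c (two_row_partition n 0) = f (two_row_exp n 0)"
    using schur_expansion_two_row_exp[OF c _ n, of 0] by simp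
  assume k: "1 \<le> k" "2 * k \<le> n"
  then obtain k' where k': "k = Suc k'" by (cases k) auto
  have "f (two_row_exp n k) = (\<Sum>j\<le>k. c (two_row_partition n j))"
    using schur_expansion_two_row_exp[OF c k(2) n] .
  moreover have "f (two_row_exp n (k - 1)) = (\<Sum>j\<le>k'. c (two_row_partition n j))"
    using schur_expansion_two_row_exp[OF c _ n, of k'] k k' by simp
  ultimately show "c (two_row_partition n k) = f (two_row_exp n k) - f (two_row_exp n (k - 1))"
    using k' by simp
qed

lemma two_s_positive_iff_mono:
  assumes sym: "symmetric_symfun f" and hom: "homogeneous n f" and n: "1 \<le> n"
    and nonneg: "\<And>e. 0 \<le> f e"
  shows "two_s_positive n f
      \<longleftrightarrow> (\<forall>k. 1 \<le> k \<longrightarrow> 2 * k \<le> n \<longrightarrow> f (two_row_exp n (k - 1)) \<le> f (two_row_exp n k))"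
proof -
  let ?c = "schur_coeff n f"
  have c: "schur_expansion n f ?c" by (rule schur_coeff_expansion[OF sym hom])
  show ?thesis
  proof
    assume pos: "two_s_positive n f"
    show "\<forall>k. 1 \<le> k \<longrightarrow> 2 * k \<le> n \<longrightarrow> f (two_row_exp n (k - 1)) \<le> f (two_row_exp n k)"
    proof (intro allI impI)
      fix k assume k: "1 \<le> k" "2 * k \<le> n"
      have "is_partition (two_row_partition n k)" "length (two_row_partition n k) \<le> 2"
        using two_row_partition_of[OF k(2) n] by (auto simp: partitions_of_def two_row_partition_def)
      then have "0 \<le> ?c (two_row_partition n k)" using pos unfolding two_s_positive_def by blast
      then show "f (two_row_exp n (k - 1)) \<le> f (two_row_exp n k)"
        using schur_coeff_two_row(2)[OF c n k] by simp
    qed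
  next
    assume mono: "\<forall>k. 1 \<le> k \<longrightarrow> 2 * k \<le> n \<longrightarrow> f (two_row_exp n (k - 1)) \<le> f (two_row_exp n k)"
    show "two_s_positive n f"
      unfolding two_s_positive_def
    proof (intro allI impI)
      fix la assume la: "is_partition la \<and> length la \<le> 2"
      show "0 \<le> ?c la"
      proof (cases "la \<in> partitions_of n")
        case False
        then show ?thesis using c unfolding schur_expansion_def by simp
      next
        case True
        obtain j where j: "2 * j \<le> n" "la = two_row_partition n j"
          using partition_length_le2[OF True _ n] la by blast
        show ?thesis
        proof (cases "j = 0")
          case True
          then show ?thesis using j schur_coeff_two_row(1)[OF c n] nonneg by simp
        next
          case False
          then show ?thesis using j schur_coeff_two_row(2)[OF c n, of j] mono by simp
        qed
      qed
    qed
  qed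
qed


section \<open>The chromatic symmetric function and bicolourings\<close>

definition colourings :: "'a set \<Rightarrow> ('a \<Rightarrow> 'a \<Rightarrow> bool) \<Rightarrow> (nat \<Rightarrow> nat) \<Rightarrow> ('a \<Rightarrow> nat) set" where
  "colourings V E e =
    {\<kappa> \<in> V \<rightarrow>\<^sub>E UNIV. proper_colouring V E \<kappa> \<and> (\<forall>i. card {v\<in>V. \<kappa> v = i} = e i)}"

lemma chromatic_sym_colourings: "chromatic_sym V E e = int (card (colourings V E e))"
  by (simp add: chromatic_sym_def colourings_def)

lemma symmetric_chromatic_sym: "symmetric_symfun (chromatic_sym V E)"
  unfolding symmetric_symfun_def
proof (intro allI impI)
  fix N p e assume p: "p permutes ({..<N}::nat set)"
  have pi1: "p (inv p x) = x" for x by (rule permutes_inverses(1)[OF p])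
  have pi2: "inv p (p x) = x" for x by (rule permutes_inverses(2)[OF p])
  define phi where "phi \<kappa> = (\<lambda>v. if v \<in> V then inv p (\<kappa> v) else undefined)" for \<kappa> :: "'a \<Rightarrow> nat"
  define psi where "psi \<kappa> = (\<lambda>v. if v \<in> V then p (\<kappa> v) else undefined)" for \<kappa> :: "'a \<Rightarrow> nat"
  have "bij_betw phi (colourings V E e) (colourings V E (e \<circ> p))"
  proof (rule bij_betw_byWitness[where f' = psi])
    show "\<forall>a\<in>colourings V E e. psi (phi a) = a"
      by (auto simp: colourings_def phi_def psi_def pi1 fun_eq_iff PiE_def extensional_def)
    show "\<forall>a'\<in>colourings V E (e \<circ> p). phi (psi a') = a'"
      by (auto simp: colourings_def phi_def psi_def pi2 fun_eq_iff PiE_def extensional_def)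
    show "phi ` colourings V E e \<subseteq> colourings V E (e \<circ> p)"
    proof safe
      fix \<kappa> assume k: "\<kappa> \<in> colourings V E e"
      have "{v\<in>V. phi \<kappa> v = i} = {v\<in>V. \<kappa> v = p i}" for i
        using pi1 pi2 by (auto simp: phi_def)
      then show "phi \<kappa> \<in> colourings V E (e \<circ> p)" using k
        by (auto simp: colourings_def phi_def proper_colouring_def PiE_def extensional_def) (metis pi1)
    qed
    show "psi ` colourings V E (e \<circ> p) \<subseteq> colourings V E e"
    proof safe
      fix \<kappa> assume k: "\<kappa> \<in> colourings V E (e \<circ> p)"
      have "{v\<in>V. psi \<kappa> v = i} = {v\<in>V. \<kappa> v = inv p i}" for i
        using pi1 pi2 by (auto simp: psi_def)
      then have "card {v\<in>V. psi \<kappa> v = i} = e i" for i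
        using k by (auto simp: colourings_def pi1)
      then show "psi \<kappa> \<in> colourings V E e" using k
        by (auto simp: colourings_def psi_def proper_colouring_def PiE_def extensional_def) (metis pi2)
    qed
  qed
  then show "chromatic_sym V E (e \<circ> p) = chromatic_sym V E e"
    by (simp add: chromatic_sym_colourings bij_betw_same_card)
qed

lemma homogeneous_chromatic_sym:
  assumes fin: "finite V"
  shows "homogeneous (card V) (chromatic_sym V E)"
  unfolding homogeneous_def
proof (intro allI impI)
  fix la assume P: "is_partition la" and s: "sum_list la \<noteq> card V"
  have "colourings V E (partition_exp la) = {}"
  proof (rule ccontr)
    assume "colourings V E (partition_exp la) \<noteq> {}"
    then obtain \<kappa> where k: "\<kappa> \<in> colourings V E (partition_exp la)" by blast
    have cls: "card {v\<in>V. \<kappa> v = i} = partition_exp la i" for i using k by (simp add: colourings_def)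
    have "\<kappa> v < length la" if "v \<in> V" for v
    proof (rule ccontr)
      assume "\<not> \<kappa> v < length la"
      then have "card {w\<in>V. \<kappa> w = \<kappa> v} = 0" using cls by (simp add: partition_exp_def)
      moreover have "v \<in> {w\<in>V. \<kappa> w = \<kappa> v}" using that by simp
      ultimately show False using fin by auto
    qed
    then have "V = (\<Union>i\<in>{..<length la}. {v\<in>V. \<kappa> v = i})" by auto
    moreover have "card (\<Union>i\<in>{..<length la}. {v\<in>V. \<kappa> v = i}) = (\<Sum>i<length la. card {v\<in>V. \<kappa> v = i})"
      by (rule card_UN_disjoint) (auto simp: fin)
    ultimately have "card V = (\<Sum>i<length la. card {v\<in>V. \<kappa> v = i})" by simp
    also have "\<dots> = (\<Sum>i<length la. partition_exp la i)" using cls by simp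
    also have "\<dots> = sum_list la" using sum_partition_exp[of la "length la"] by simp
    finally show False using s by simp
  qed
  then show "chromatic_sym V E (partition_exp la) = 0" by (simp add: chromatic_sym_colourings)
qed

definition independent :: "('a \<Rightarrow> 'a \<Rightarrow> bool) \<Rightarrow> 'a set \<Rightarrow> bool" where
  "independent E A \<longleftrightarrow> (\<forall>u\<in>A. \<forall>v\<in>A. \<not> E u v)"

definition bicolourings :: "'a set \<Rightarrow> ('a \<Rightarrow> 'a \<Rightarrow> bool) \<Rightarrow> nat \<Rightarrow> 'a set set" where
  "bicolourings V E k = {A. A \<subseteq> V \<and> independent E A \<and> independent E (V - A) \<and> card A = k}"

definition bicolouring_count :: "'a set \<Rightarrow> ('a \<Rightarrow> 'a \<Rightarrow> bool) \<Rightarrow> nat \<Rightarrow> nat" where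
  "bicolouring_count V E k = card (bicolourings V E k)"

lemma colourings_two_row_exp_values:
  assumes "finite V" "\<kappa> \<in> colourings V E (two_row_exp (card V) k)" "v \<in> V"
  shows "\<kappa> v = 0 \<or> \<kappa> v = 1"
proof (rule ccontr)
  assume "\<not> (\<kappa> v = 0 \<or> \<kappa> v = 1)"
  then have "card {w\<in>V. \<kappa> w = \<kappa> v} = 0" using assms(2) by (simp add: colourings_def two_row_exp_def)
  moreover have "v \<in> {w\<in>V. \<kappa> w = \<kappa> v}" using assms(3) by simp
  ultimately show False using assms(1) by auto
qed

lemma colour_class_bicolouring:
  assumes fin: "finite V" and \<kappa>: "\<kappa> \<in> colourings V E (two_row_exp (card V) k)"
  shows "{v\<in>V. \<kappa> v = 1} \<in> bicolourings V E k"
proof -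
  have proper: "proper_colouring V E \<kappa>" using \<kappa> by (simp add: colourings_def)
  have class_independent: "independent E {v\<in>V. \<kappa> v = i}" for i
    using proper unfolding independent_def proper_colouring_def by fastforce
  have "V - {v\<in>V. \<kappa> v = 1} = {v\<in>V. \<kappa> v = 0}"
    using colourings_two_row_exp_values[OF fin \<kappa>] by auto
  moreover have "card {v\<in>V. \<kappa> v = 1} = k" using \<kappa> by (simp add: colourings_def two_row_exp_def)
  ultimately show ?thesis using class_independent unfolding bicolourings_def by auto
qed

definition bicolouring_colouring :: "'a set \<Rightarrow> 'a set \<Rightarrow> 'a \<Rightarrow> nat" where
  "bicolouring_colouring V A v = (if v \<in> V then (if v \<in> A then 1 else 0) else undefined)"

lemma bicolouring_colouring_colourings:
  assumes fin: "finite V" and A: "A \<in> bicolourings V E k"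
  shows "bicolouring_colouring V A \<in> colourings V E (two_row_exp (card V) k)"
proof -
  have A: "A \<subseteq> V" "card A = k" "independent E A" "independent E (V - A)"
    using A by (auto simp: bicolourings_def)
  have "proper_colouring V E (bicolouring_colouring V A)"
    using A unfolding proper_colouring_def independent_def bicolouring_colouring_def by auto
  moreover have "card {v\<in>V. bicolouring_colouring V A v = i} = two_row_exp (card V) k i" for i
  proof -
    have "{v\<in>V. bicolouring_colouring V A v = i}
        = (if i = 0 then V - A else if i = 1 then A else {})"
      using A by (auto simp: bicolouring_colouring_def)
    then show ?thesis using A fin by (simp add: two_row_exp_def card_Diff_subset finite_subset)
  qed
  ultimately show ?thesis
    by (auto simp: colourings_def bicolouring_colouring_def PiE_def extensional_def)
qed

lemma chromatic_sym_two_row_exp: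
  assumes fin: "finite V"
  shows "chromatic_sym V E (two_row_exp (card V) k) = int (bicolouring_count V E k)"
proof -
  have "bij_betw (\<lambda>\<kappa>. {v\<in>V. \<kappa> v = 1}) (colourings V E (two_row_exp (card V) k)) (bicolourings V E k)"
  proof (rule bij_betw_byWitness[where f' = "bicolouring_colouring V"])
    show "\<forall>\<kappa>\<in>colourings V E (two_row_exp (card V) k). bicolouring_colouring V {v\<in>V. \<kappa> v = 1} = \<kappa>"
      using colourings_two_row_exp_values[OF fin]
      by (fastforce simp: bicolouring_colouring_def colourings_def PiE_def extensional_def)
    show "\<forall>A\<in>bicolourings V E k. {v\<in>V. bicolouring_colouring V A v = 1} = A"
      by (auto simp: bicolourings_def bicolouring_colouring_def)
  qed (use colour_class_bicolouring[OF fin] bicolouring_colouring_colourings[OF fin] in auto)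
  then show ?thesis by (simp add: chromatic_sym_colourings bicolouring_count_def bij_betw_same_card)
qed

lemma chrom_two_s_positive_iff_mono:
  assumes fin: "finite V" and ne: "V \<noteq> {}"
  shows "chrom_two_s_positive V E \<longleftrightarrow>
    (\<forall>k. 1 \<le> k \<longrightarrow> 2 * k \<le> card V \<longrightarrow> bicolouring_count V E (k - 1) \<le> bicolouring_count V E k)"
proof -
  let ?X = "chromatic_sym V E" and ?n = "card V"
  have n: "1 \<le> ?n" using fin ne by (simp add: Suc_le_eq card_gt_0_iff)
  have "chrom_two_s_positive V E \<longleftrightarrow>
      (\<forall>k. 1 \<le> k \<longrightarrow> 2 * k \<le> ?n \<longrightarrow> ?X (two_row_exp ?n (k - 1)) \<le> ?X (two_row_exp ?n k))"
    unfolding chrom_two_s_positive_def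
    using symmetric_chromatic_sym homogeneous_chromatic_sym[OF fin] n
    by (rule two_s_positive_iff_mono) (simp add: chromatic_sym_def)
  then show ?thesis using chromatic_sym_two_row_exp[OF fin] by simp
qed


section \<open>Symmetric unimodal sequences and convolution\<close>

definition convolve :: "(nat \<Rightarrow> nat) \<Rightarrow> (nat \<Rightarrow> nat) \<Rightarrow> nat \<Rightarrow> nat" where
  "convolve p q k = (\<Sum>j\<le>k. p j * q (k - j))"

definition symm_unimodal :: "nat \<Rightarrow> (nat \<Rightarrow> nat) \<Rightarrow> bool" where
  "symm_unimodal n p \<longleftrightarrow> (\<forall>k>n. p k = 0) \<and> (\<forall>k\<le>n. p (n - k) = p k) \<and>
     (\<forall>k. 1 \<le> k \<longrightarrow> 2 * k \<le> n \<longrightarrow> p (k - 1) \<le> p k)"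

definition sym_block :: "nat \<Rightarrow> nat \<Rightarrow> nat \<Rightarrow> nat" where
  "sym_block n a k = (if a \<le> k \<and> k + a \<le> n then 1 else 0)"

lemma symm_unimodal_mono:
  assumes "symm_unimodal n p" "j \<le> k" "2 * k \<le> n"
  shows "p j \<le> p k"
  using assms(2,3)
proof (induction k)
  case 0 then show ?case by simp
next
  case (Suc k)
  show ?case
  proof (cases "j = Suc k")
    case True then show ?thesis by simp
  next
    case False
    then have "p j \<le> p k" using Suc by simp
    moreover have "p k \<le> p (Suc k)" using assms(1) Suc(3) unfolding symm_unimodal_def
      by (metis diff_Suc_1 le_add1 plus_1_eq_Suc)
    ultimately show ?thesis by simp
  qed
qed

lemma symm_unimodal_zero: "symm_unimodal n (\<lambda>_. 0)"
  by (simp add: symm_unimodal_def)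

lemma symm_unimodal_add: "symm_unimodal n p \<Longrightarrow> symm_unimodal n q \<Longrightarrow> symm_unimodal n (\<lambda>k. p k + q k)"
  unfolding symm_unimodal_def by (auto intro: add_mono)

lemma convolve_add_left: "convolve (\<lambda>k. p k + p' k) q = (\<lambda>k. convolve p q k + convolve p' q k)"
  by (auto simp: convolve_def fun_eq_iff algebra_simps sum.distrib)

lemma convolve_add_right: "convolve p (\<lambda>k. q k + q' k) = (\<lambda>k. convolve p q k + convolve p q' k)"
  by (auto simp: convolve_def fun_eq_iff algebra_simps sum.distrib)

lemma convolve_zero_left: "convolve (\<lambda>_. 0) q = (\<lambda>_. 0)"
  by (simp add: convolve_def fun_eq_iff)

lemma convolve_zero_right: "convolve p (\<lambda>_. 0) = (\<lambda>_. 0)"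
  by (simp add: convolve_def fun_eq_iff)

lemma convolve_support_le1:
  assumes q: "\<And>j. 2 \<le> j \<Longrightarrow> q j = 0"
  shows "convolve q p k = q 0 * p k + (if 1 \<le> k then q 1 * p (k - 1) else 0)"
proof (cases k)
  case 0 then show ?thesis by (simp add: convolve_def)
next
  case (Suc k')
  have "convolve q p k = (\<Sum>j\<in>{0, 1}. q j * p (k - j))"
    unfolding convolve_def using Suc q by (intro sum.mono_neutral_right) auto
  then show ?thesis using Suc by simp
qed

lemma symm_unimodal_sym_block: "2 * a \<le> n \<Longrightarrow> symm_unimodal n (sym_block n a)"
  unfolding symm_unimodal_def sym_block_def by auto

lemma symm_unimodal_diff_sym_block:
  assumes S: "symm_unimodal n p" and a: "2 * a \<le> n" and below: "\<And>k. k < a \<Longrightarrow> p k = 0"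
  shows "symm_unimodal n (\<lambda>k. p k - sym_block n a k)"
  unfolding symm_unimodal_def
proof (intro conjI allI impI)
  fix k assume "n < k" then show "p k - sym_block n a k = 0"
    using S by (simp add: symm_unimodal_def)
next
  fix k assume k: "k \<le> n"
  have "sym_block n a (n - k) = sym_block n a k" using k by (auto simp: sym_block_def)
  then show "p (n - k) - sym_block n a (n - k) = p k - sym_block n a k"
    using S k by (simp add: symm_unimodal_def)
next
  fix k assume k: "1 \<le> k" "2 * k \<le> n"
  show "p (k - 1) - sym_block n a (k - 1) \<le> p k - sym_block n a k"
  proof (cases "a \<le> k - 1")
    case True
    then have "sym_block n a (k - 1) = 1" "sym_block n a k = 1"
      using k a by (auto simp: sym_block_def)
    moreover have "p (k - 1) \<le> p k" using S k by (simp add: symm_unimodal_def)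
    ultimately show ?thesis by simp
  next
    case False
    then show ?thesis using below k by simp
  qed
qed

text \<open>A nonzero symmetric unimodal sequence contains the block starting at its first nonzero entry.\<close>

lemma symm_unimodal_peel_sym_block:
  assumes S: "symm_unimodal n p" and nz: "\<exists>k. p k \<noteq> 0"
  obtains a where "2 * a \<le> n" "\<And>k. sym_block n a k \<le> p k"
    "symm_unimodal n (\<lambda>k. p k - sym_block n a k)"
    "(\<Sum>k\<le>n. p k - sym_block n a k) < (\<Sum>k\<le>n. p k)"
proof -
  define a where "a = (LEAST k. p k \<noteq> 0)"
  have pa: "p a \<noteq> 0" using nz unfolding a_def by (rule LeastI_ex)
  have below: "p k = 0" if "k < a" for k using that unfolding a_def using not_less_Least by blast
  have sym: "\<forall>k\<le>n. p (n - k) = p k" using S unfolding symm_unimodal_def by auto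
  have an: "a \<le> n" using S pa unfolding symm_unimodal_def by (meson not_le)
  have a2: "2 * a \<le> n"
  proof (rule ccontr)
    assume "\<not> 2 * a \<le> n"
    then have "p (n - a) = 0" using an by (intro below) linarith
    then show False using sym an pa by simp
  qed
  have "1 \<le> p k" if "a \<le> k" "k + a \<le> n" for k
  proof (cases "2 * k \<le> n")
    case True
    then show ?thesis using symm_unimodal_mono[OF S that(1)] pa by simp
  next
    case False
    then have "p a \<le> p (n - k)" using symm_unimodal_mono[OF S, of a "n - k"] that by simp
    then show ?thesis using sym that pa by simp
  qed
  then have le: "sym_block n a k \<le> p k" for k by (simp add: sym_block_def)
  have "(\<Sum>k\<le>n. p k - sym_block n a k) < (\<Sum>k\<le>n. p k)"
  proof (rule sum_strict_mono_ex1)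
    have "sym_block n a a = 1" using a2 by (simp add: sym_block_def)
    then show "\<exists>x\<in>{..n}. p x - sym_block n a x < p x" using an pa by (intro bexI[of _ a]) auto
  qed auto
  then show ?thesis using that a2 le symm_unimodal_diff_sym_block[OF S a2 below] by blast
qed

lemma sum_indicator_eq_card: "(\<Sum>j\<le>(k::nat). (if P j then 1 else 0 :: nat)) = card {j. j \<le> k \<and> P j}"
proof -
  have "(\<Sum>j\<le>k. (if P j then 1 else 0 :: nat)) = (\<Sum>j\<in>{j \<in> {..k}. P j}. 1)"
    by (rule sum.inter_filter[symmetric]) simp
  moreover have "{j \<in> {..k}. P j} = {j. j \<le> k \<and> P j}" by auto
  ultimately show ?thesis by simp
qed

definition block_pairs :: "nat \<Rightarrow> nat \<Rightarrow> nat \<Rightarrow> nat \<Rightarrow> nat \<Rightarrow> nat set" where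
  "block_pairs n a m b k = {j. j \<le> k \<and> (a \<le> j \<and> j + a \<le> n) \<and> (b \<le> k - j \<and> k - j + b \<le> m)}"

lemma convolve_sym_blocks:
  "convolve (sym_block n a) (sym_block m b) k = card (block_pairs n a m b k)"
proof -
  have "convolve (sym_block n a) (sym_block m b) k
      = (\<Sum>j\<le>k. (if (a \<le> j \<and> j + a \<le> n) \<and> (b \<le> k - j \<and> k - j + b \<le> m) then 1 else 0 :: nat))"
    unfolding convolve_def sym_block_def by (intro sum.cong) auto
  then show ?thesis unfolding sum_indicator_eq_card block_pairs_def .
qed

lemma card_block_pairs:
  assumes "2 * a \<le> n" "2 * b \<le> m"
  shows "card (block_pairs n a m b k)
    = (if b \<le> k then Suc (min (n - a) (k - b)) - max a (k + b - m) else 0)"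
proof -
  have "block_pairs n a m b k = (if b \<le> k then {max a (k + b - m) .. min (n - a) (k - b)} else {})"
    unfolding block_pairs_def using assms by (auto simp: max_def min_def)
  then show ?thesis by simp
qed

lemma card_block_pairs_reflect:
  assumes "k \<le> n + m"
  shows "card (block_pairs n a m b (n + m - k)) = card (block_pairs n a m b k)"
proof -
  have "bij_betw (\<lambda>j. n - j) (block_pairs n a m b k) (block_pairs n a m b (n + m - k))"
    by (rule bij_betw_byWitness[where f' = "\<lambda>j. n - j"]) (use assms in \<open>auto simp: block_pairs_def\<close>)
  then show ?thesis by (simp add: bij_betw_same_card)
qed

text \<open>
  Passing from k - 1 to k moves both ends of the interval block_pairs up by at most one,
  and below the middle the upper end moves whenever the lower end does.
\<close>

lemma card_block_pairs_mono:
  assumes a: "2 * a \<le> n" and b: "2 * b \<le> m" and k: "2 * Suc k \<le> n + m"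
  shows "card (block_pairs n a m b k) \<le> card (block_pairs n a m b (Suc k))"
proof (cases "b \<le> k")
  case False
  then show ?thesis unfolding card_block_pairs[OF a b] by simp
next
  case True
  define u where "u = min (n - a) (k - b)"
  define u' where "u' = min (n - a) (Suc k - b)"
  define l where "l = max a (k + b - m)"
  define l' where "l' = max a (Suc k + b - m)"
  have "u \<le> u'" "u' \<le> Suc u" using True unfolding u_def u'_def by auto
  moreover have "l \<le> l'" "l' \<le> Suc l" unfolding l_def l'_def by auto
  moreover have "u' = Suc u \<or> l' = l"
  proof (cases "Suc k - b \<le> n - a")
    case True
    then show ?thesis using \<open>b \<le> k\<close> unfolding u_def u'_def by auto
  next
    case False
    moreover have "2 * k + 2 \<le> n + m" using k by simp
    ultimately have "Suc k + b \<le> m + a" using \<open>b \<le> k\<close> by linarith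
    then show ?thesis unfolding l_def l'_def by auto
  qed
  ultimately have "Suc u - l \<le> Suc u' - l'" by linarith
  then show ?thesis unfolding card_block_pairs[OF a b]
    using True by (simp add: u_def u'_def l_def l'_def)
qed

lemma symm_unimodal_convolve_sym_blocks:
  assumes a: "2 * a \<le> n" and b: "2 * b \<le> m"
  shows "symm_unimodal (n + m) (convolve (sym_block n a) (sym_block m b))"
  unfolding symm_unimodal_def convolve_sym_blocks
proof (intro conjI allI impI)
  fix k assume "n + m < k"
  then have "block_pairs n a m b k = {}" unfolding block_pairs_def by auto
  then show "card (block_pairs n a m b k) = 0" by simp
next
  fix k assume "k \<le> n + m"
  then show "card (block_pairs n a m b (n + m - k)) = card (block_pairs n a m b k)"
    by (rule card_block_pairs_reflect)
next
  fix k assume k: "1 \<le> k" "2 * k \<le> n + m"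
  then obtain K where "k = Suc K" by (cases k) auto
  then show "card (block_pairs n a m b (k - 1)) \<le> card (block_pairs n a m b k)"
    using card_block_pairs_mono[OF a b] k by simp
qed

lemma symm_unimodal_block_induct [consumes 1, case_names zero block]:
  assumes "symm_unimodal n p"
    and zero: "P (\<lambda>_. 0)"
    and block: "\<And>a q. 2 * a \<le> n \<Longrightarrow> symm_unimodal n q \<Longrightarrow> P q \<Longrightarrow> P (\<lambda>k. sym_block n a k + q k)"
  shows "P p"
  using assms(1)
proof (induction "\<Sum>k\<le>n. p k" arbitrary: p rule: less_induct)
  case less
  show ?case
  proof (cases "\<exists>k. p k \<noteq> 0")
    case False
    then have "p = (\<lambda>_. 0)" by auto
    then show ?thesis using zero by simp
  next
    case True
    obtain a where a: "2 * a \<le> n" "\<And>k. sym_block n a k \<le> p k"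
      "symm_unimodal n (\<lambda>k. p k - sym_block n a k)" "(\<Sum>k\<le>n. p k - sym_block n a k) < (\<Sum>k\<le>n. p k)"
      using symm_unimodal_peel_sym_block[OF less(2) True] by blast
    have "p = (\<lambda>k. sym_block n a k + (p k - sym_block n a k))" using a(2) by (auto simp: fun_eq_iff)
    then show ?thesis using block[OF a(1,3) less(1)[OF a(4,3)]] by simp
  qed
qed

lemma symm_unimodal_convolve_sym_block:
  assumes a: "2 * a \<le> n" and q: "symm_unimodal m q"
  shows "symm_unimodal (n + m) (convolve (sym_block n a) q)"
  using q
proof (induction q rule: symm_unimodal_block_induct)
  case zero
  then show ?case using symm_unimodal_zero by (simp add: convolve_zero_right)
next
  case (block b q)
  then show ?case
    using symm_unimodal_add[OF symm_unimodal_convolve_sym_blocks[OF a block(1)]]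
    by (simp add: convolve_add_right)
qed

lemma symm_unimodal_convolve:
  assumes p: "symm_unimodal n p" and q: "symm_unimodal m q"
  shows "symm_unimodal (n + m) (convolve p q)"
  using p
proof (induction p rule: symm_unimodal_block_induct)
  case zero
  then show ?case using symm_unimodal_zero by (simp add: convolve_zero_left)
next
  case (block a p)
  then show ?case
    using symm_unimodal_add[OF symm_unimodal_convolve_sym_block[OF block(1) q]]
    by (simp add: convolve_add_left)
qed


section \<open>Bicolourings of disjoint unions\<close>

lemma bicolourings_subset_Pow: "bicolourings S E k \<subseteq> Pow S"
  by (auto simp: bicolourings_def)

lemma finite_bicolourings: "finite S \<Longrightarrow> finite (bicolourings S E k)"
  by (rule finite_subset[OF bicolourings_subset_Pow]) simp

lemma independent_subset: "independent E A \<Longrightarrow> B \<subseteq> A \<Longrightarrow> independent E B"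
  by (auto simp: independent_def)

lemma bicolourings_Un_restrict:
  assumes fin: "finite S1" "finite S2" and dis: "S1 \<inter> S2 = {}"
    and A: "A \<in> bicolourings (S1 \<union> S2) E k"
  shows "card (A \<inter> S1) \<le> k" "A \<inter> S1 \<in> bicolourings S1 E (card (A \<inter> S1))"
    "A \<inter> S2 \<in> bicolourings S2 E (k - card (A \<inter> S1))"
proof -
  have A: "A \<subseteq> S1 \<union> S2" "independent E A" "independent E (S1 \<union> S2 - A)" "card A = k"
    using A by (auto simp: bicolourings_def)
  have "card A = card (A \<inter> S1) + card (A \<inter> S2)"
    using A(1) dis fin card_Un_disjoint[of "A \<inter> S1" "A \<inter> S2"]
    by (metis Int_Un_distrib finite_Int inf.absorb1 inf_assoc inf_bot_right inf_commute)
  then show "card (A \<inter> S1) \<le> k" "A \<inter> S1 \<in> bicolourings S1 E (card (A \<inter> S1))"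
    "A \<inter> S2 \<in> bicolourings S2 E (k - card (A \<inter> S1))"
    using A independent_subset[OF A(2)] independent_subset[OF A(3), of "S1 - A \<inter> S1"]
      independent_subset[OF A(3), of "S2 - A \<inter> S2"] by (auto simp: bicolourings_def)
qed

lemma bicolourings_Un_join:
  assumes fin: "finite S1" "finite S2" and dis: "S1 \<inter> S2 = {}"
    and no_edge: "\<And>u v. u \<in> S1 \<Longrightarrow> v \<in> S2 \<Longrightarrow> \<not> E u v \<and> \<not> E v u"
    and A1: "A1 \<in> bicolourings S1 E j" and A2: "A2 \<in> bicolourings S2 E (k - j)" and j: "j \<le> k"
  shows "A1 \<union> A2 \<in> bicolourings (S1 \<union> S2) E k"
proof -
  have indep_Un: "independent E (B1 \<union> B2)"
    if "independent E B1" "independent E B2" "B1 \<subseteq> S1" "B2 \<subseteq> S2" for B1 B2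
    using that no_edge unfolding independent_def by blast
  have A: "A1 \<subseteq> S1" "A2 \<subseteq> S2" "independent E A1" "independent E A2"
    "independent E (S1 - A1)" "independent E (S2 - A2)" "card A1 = j" "card A2 = k - j"
    using A1 A2 by (auto simp: bicolourings_def)
  have "S1 \<union> S2 - (A1 \<union> A2) = (S1 - A1) \<union> (S2 - A2)" using A dis by blast
  moreover have "card (A1 \<union> A2) = k"
    using A j dis fin by (subst card_Un_disjoint) (auto intro: finite_subset)
  ultimately show ?thesis
    using A indep_Un[of A1 A2] indep_Un[of "S1 - A1" "S2 - A2"] by (auto simp: bicolourings_def)
qed

lemma bicolouring_count_Un:
  assumes fin: "finite S1" "finite S2" and dis: "S1 \<inter> S2 = {}"
    and no_edge: "\<And>u v. u \<in> S1 \<Longrightarrow> v \<in> S2 \<Longrightarrow> \<not> E u v \<and> \<not> E v u"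
  shows "bicolouring_count (S1 \<union> S2) E = convolve (bicolouring_count S1 E) (bicolouring_count S2 E)"
proof
  fix k
  define X where "X = (\<Union>j\<le>k. bicolourings S1 E j \<times> bicolourings S2 E (k - j))"
  have "card X = (\<Sum>j\<le>k. bicolouring_count S1 E j * bicolouring_count S2 E (k - j))"
    unfolding X_def
  proof (subst card_UN_disjoint)
    show "\<forall>i\<in>{..k}. \<forall>j\<in>{..k}. i \<noteq> j \<longrightarrow>
        (bicolourings S1 E i \<times> bicolourings S2 E (k - i))
          \<inter> (bicolourings S1 E j \<times> bicolourings S2 E (k - j)) = {}"
      by (auto simp: bicolourings_def)
  qed (simp_all add: fin finite_bicolourings bicolouring_count_def card_cartesian_product)
  moreover have "bij_betw (\<lambda>A. (A \<inter> S1, A \<inter> S2)) (bicolourings (S1 \<union> S2) E k) X"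
  proof (rule bij_betw_byWitness[where f' = "\<lambda>(A1, A2). A1 \<union> A2"])
    show "(\<lambda>A. (A \<inter> S1, A \<inter> S2)) ` bicolourings (S1 \<union> S2) E k \<subseteq> X"
    proof safe
      fix A assume "A \<in> bicolourings (S1 \<union> S2) E k"
      from bicolourings_Un_restrict[OF fin dis this] show "(A \<inter> S1, A \<inter> S2) \<in> X"
        unfolding X_def by blast
    qed
    show "(\<lambda>(A1, A2). A1 \<union> A2) ` X \<subseteq> bicolourings (S1 \<union> S2) E k"
    proof safe
      fix A1 A2 assume "(A1, A2) \<in> X"
      then obtain j where "j \<le> k" "A1 \<in> bicolourings S1 E j" "A2 \<in> bicolourings S2 E (k - j)"
        unfolding X_def by blast
      from bicolourings_Un_join[OF fin dis no_edge this(2,3,1)]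
      show "A1 \<union> A2 \<in> bicolourings (S1 \<union> S2) E k" .
    qed
    show "\<forall>A\<in>bicolourings (S1 \<union> S2) E k. (\<lambda>(A1, A2). A1 \<union> A2) (A \<inter> S1, A \<inter> S2) = A"
      by (auto simp: bicolourings_def)
    show "\<forall>A'\<in>X. (\<lambda>A. (A \<inter> S1, A \<inter> S2)) ((\<lambda>(A1, A2). A1 \<union> A2) A') = A'"
      using dis by (auto simp: X_def bicolourings_def)
  qed
  ultimately show "bicolouring_count (S1 \<union> S2) E k
      = convolve (bicolouring_count S1 E) (bicolouring_count S2 E) k"
    unfolding bicolouring_count_def convolve_def by (simp add: bij_betw_same_card)
qed

lemma bicolouring_count_gt: "finite S \<Longrightarrow> card S < k \<Longrightarrow> bicolouring_count S E k = 0"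
proof -
  assume "finite S" "card S < k"
  then have "bicolourings S E k = {}" by (auto simp: bicolourings_def dest: card_mono)
  then show ?thesis by (simp add: bicolouring_count_def)
qed

lemma bicolouring_count_sym:
  assumes "finite S" "k \<le> card S"
  shows "bicolouring_count S E (card S - k) = bicolouring_count S E k"
proof -
  have "bij_betw (\<lambda>A. S - A) (bicolourings S E k) (bicolourings S E (card S - k))"
  proof (rule bij_betw_byWitness[where f' = "\<lambda>A. S - A"])
    show "\<forall>a\<in>bicolourings S E k. S - (S - a) = a" by (auto simp: bicolourings_def)
    show "\<forall>a\<in>bicolourings S E (card S - k). S - (S - a) = a" by (auto simp: bicolourings_def)
    show "(-) S ` bicolourings S E k \<subseteq> bicolourings S E (card S - k)"
      using assms by (auto simp: bicolourings_def card_Diff_subset finite_subset Diff_Diff_Int Int_absorb1)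
    show "(-) S ` bicolourings S E (card S - k) \<subseteq> bicolourings S E k"
      using assms by (auto simp: bicolourings_def card_Diff_subset finite_subset Diff_Diff_Int Int_absorb1)
  qed
  then show ?thesis unfolding bicolouring_count_def by (simp add: bij_betw_same_card)
qed

lemma chrom_two_s_positive_iff_symm_unimodal:
  assumes fin: "finite S" and ne: "S \<noteq> {}"
  shows "chrom_two_s_positive S E \<longleftrightarrow> symm_unimodal (card S) (bicolouring_count S E)"
  unfolding chrom_two_s_positive_iff_mono[OF fin ne] symm_unimodal_def
  using bicolouring_count_gt[OF fin] bicolouring_count_sym[OF fin] by auto

lemma bicolouring_count_empty: "bicolouring_count {} E k = (if k = 0 then 1 else 0)"
proof -
  have "bicolourings {} E k = (if k = 0 then {{}} else {})"
    by (auto simp: bicolourings_def independent_def)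
  then show ?thesis by (simp add: bicolouring_count_def)
qed

lemma symm_unimodal_bicolouring_count_empty: "symm_unimodal 0 (bicolouring_count {} E)"
  by (simp add: symm_unimodal_def bicolouring_count_empty)

lemma bicolouring_count_singleton:
  assumes "\<not> E x x"
  shows "bicolouring_count {x} E k = (if k \<le> 1 then 1 else 0)"
proof -
  have "bicolourings {x} E k = (if k = 0 then {{}} else if k = 1 then {{x}} else {})"
    using assms by (auto simp: bicolourings_def independent_def card_Suc_eq subset_singleton_iff)
  then show ?thesis by (simp add: bicolouring_count_def)
qed

lemma bicolouring_count_insert_isolated:
  assumes "finite S" "x \<notin> S" "\<not> E x x" "\<And>u. u \<in> S \<Longrightarrow> \<not> E x u \<and> \<not> E u x"
  shows "bicolouring_count (insert x S) E k
    = bicolouring_count S E k + (if 1 \<le> k then bicolouring_count S E (k - 1) else 0)"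
proof -
  have "bicolouring_count ({x} \<union> S) E = convolve (bicolouring_count {x} E) (bicolouring_count S E)"
    by (rule bicolouring_count_Un) (use assms in auto)
  then show ?thesis
    using convolve_support_le1[of "bicolouring_count {x} E"]
      bicolouring_count_singleton[of E x, OF assms(3)]
    by simp
qed

section \<open>Components\<close>

definition edge_closed :: "'a set \<Rightarrow> ('a \<Rightarrow> 'a \<Rightarrow> bool) \<Rightarrow> 'a set \<Rightarrow> bool" where
  "edge_closed W E S \<longleftrightarrow> S \<subseteq> W \<and> (\<forall>u\<in>S. \<forall>v\<in>W. E u v \<longrightarrow> v \<in> S)"

lemma reachable_in: "reachable W E x y \<Longrightarrow> x \<in> W \<Longrightarrow> y \<in> W"
  unfolding reachable_def by (induction rule: rtranclp_induct) auto

lemma reachable_refl: "reachable W E x x"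
  unfolding reachable_def by simp

lemma reachable_step: "reachable W E x y \<Longrightarrow> y \<in> W \<Longrightarrow> z \<in> W \<Longrightarrow> E y z \<Longrightarrow> reachable W E x z"
  unfolding reachable_def by (rule rtranclp.rtrancl_into_rtrancl) auto

lemma reachable_trans: "reachable W E x y \<Longrightarrow> reachable W E y z \<Longrightarrow> reachable W E x z"
  unfolding reachable_def by (rule rtranclp_trans)

lemma reachable_sym:
  assumes sym: "\<forall>u\<in>W. \<forall>v\<in>W. E u v \<longrightarrow> E v u"
  shows "reachable W E x y \<Longrightarrow> reachable W E y x"
  unfolding reachable_def
proof (induction rule: rtranclp_induct)
  case base then show ?case by simp
next
  case (step y z)
  then show ?case using sym by (metis (mono_tags, lifting) converse_rtranclp_into_rtranclp)
qed

lemma reachable_edge_closed: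
  assumes S: "edge_closed W E S" and x: "x \<in> S" and r: "reachable W E x y"
  shows "y \<in> S"
  using r unfolding reachable_def
proof (induction rule: rtranclp_induct)
  case base then show ?case using x by simp
next
  case (step y z) then show ?case using S unfolding edge_closed_def by blast
qed

lemma edge_closed_component:
  assumes "x0 \<in> W"
  shows "edge_closed W E {y\<in>W. reachable W E x0 y}"
  unfolding edge_closed_def using reachable_step by fastforce

lemma component_of_isolated_vertex:
  assumes sym: "\<forall>u\<in>W. \<forall>v\<in>W. E u v \<longrightarrow> E v u" and x: "isolated_vertex W E x"
    and T: "T = {y\<in>W. reachable W E x0 y}" and xT: "x \<in> T"
  shows "T = {x}"
proof -
  have "y = x" if "y \<in> T" for y
  proof -
    have "reachable W E x y"
      using reachable_trans[OF reachable_sym[OF sym]] xT that T by blast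
    then show "y = x" unfolding reachable_def
      by (cases rule: converse_rtranclpE) (use x in \<open>auto simp: isolated_vertex_def\<close>)
  qed
  then show ?thesis using xT by blast
qed

lemma edge_closed_insert_isolated:
  assumes D: "edge_closed W E D" and x: "isolated_vertex W E x"
  shows "edge_closed W E (insert x D)"
  using assms by (auto simp: edge_closed_def isolated_vertex_def)

lemma edge_closed_Diff:
  assumes sym: "\<forall>u\<in>W. \<forall>v\<in>W. E u v \<longrightarrow> E v u"
    and S: "edge_closed W E S" and D: "edge_closed W E D" and sub: "D \<subseteq> S"
  shows "edge_closed W E (S - D)"
  unfolding edge_closed_def
proof (intro conjI ballI impI)
  show "S - D \<subseteq> W" using S by (auto simp: edge_closed_def)
  fix u v assume u: "u \<in> S - D" and v: "v \<in> W" and e: "E u v"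
  have "u \<in> W" using u S by (auto simp: edge_closed_def)
  then have "v \<notin> D" using D sym v e u by (auto simp: edge_closed_def)
  moreover have "v \<in> S" using S u v e by (auto simp: edge_closed_def)
  ultimately show "v \<in> S - D" by simp
qed

lemma bicolouring_count_edge_closed_split:
  assumes sym: "\<forall>u\<in>W. \<forall>v\<in>W. E u v \<longrightarrow> E v u" and fin: "finite W"
    and D: "edge_closed W E D" and DS: "D \<subseteq> S" and SW: "S \<subseteq> W"
  shows "bicolouring_count S E = convolve (bicolouring_count D E) (bicolouring_count (S - D) E)"
proof -
  have "\<not> E u v \<and> \<not> E v u" if "u \<in> D" "v \<in> S - D" for u v
    using D sym DS SW that unfolding edge_closed_def by blast
  moreover have "finite S" using fin SW finite_subset by blast
  ultimately have "bicolouring_count (D \<union> (S - D)) E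
      = convolve (bicolouring_count D E) (bicolouring_count (S - D) E)"
    using DS by (intro bicolouring_count_Un) (auto intro: finite_subset)
  moreover have "D \<union> (S - D) = S" using DS by blast
  ultimately show ?thesis by simp
qed

lemma card_Diff_add: "finite S \<Longrightarrow> D \<subseteq> S \<Longrightarrow> card S = card D + card (S - D)"
  by (metis card_Diff_subset finite_subset le_add_diff_inverse card_mono)

lemma symm_unimodal_edge_closed:
  assumes sym: "\<forall>u\<in>W. \<forall>v\<in>W. E u v \<longrightarrow> E v u" and fin: "finite W"
    and pos: "\<And>C. is_component W E C \<Longrightarrow> C \<subseteq> S \<Longrightarrow> chrom_two_s_positive C E"
    and S: "edge_closed W E S"
  shows "symm_unimodal (card S) (bicolouring_count S E)"
  using pos S
proof (induction "card S" arbitrary: S rule: less_induct)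
  case less
  have finS: "finite S" using less(3) fin by (auto simp: edge_closed_def intro: finite_subset)
  show ?case
  proof (cases "S = {}")
    case True then show ?thesis using symm_unimodal_bicolouring_count_empty by simp
  next
    case False
    then obtain v where v: "v \<in> S" by blast
    have vW: "v \<in> W" using v less(3) by (auto simp: edge_closed_def)
    define D where "D = {y\<in>W. reachable W E v y}"
    have D: "edge_closed W E D" unfolding D_def by (rule edge_closed_component[OF vW])
    have DS: "D \<subseteq> S" using reachable_edge_closed[OF less(3) v] by (auto simp: D_def)
    have vD: "v \<in> D" using vW reachable_refl by (simp add: D_def)
    have finD: "finite D" using DS finS finite_subset by blast
    have "is_component W E D" unfolding is_component_def D_def using vW by blast
    then have SU_D: "symm_unimodal (card D) (bicolouring_count D E)"
      using less(2) DS chrom_two_s_positive_iff_symm_unimodal[OF finD] vD by blast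
    have "card (S - D) < card S" by (rule psubset_card_mono) (use finS vD v in auto)
    moreover have "edge_closed W E (S - D)" by (rule edge_closed_Diff[OF sym less(3) D DS])
    ultimately have SU_rest: "symm_unimodal (card (S - D)) (bicolouring_count (S - D) E)"
      using less(1) less(2) by blast
    have "S \<subseteq> W" using less(3) by (simp add: edge_closed_def)
    then show ?thesis
      using symm_unimodal_convolve[OF SU_D SU_rest] card_Diff_add[OF finS DS]
        bicolouring_count_edge_closed_split[OF sym fin D DS] by simp
  qed
qed

lemma chrom_two_s_positive_if_other_components:
  assumes sym: "\<forall>u\<in>W. \<forall>v\<in>W. E u v \<longrightarrow> E v u" and fin: "finite W" and ne: "W \<noteq> {}"
    and D: "edge_closed W E D" and SU_D: "symm_unimodal (card D) (bicolouring_count D E)"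
    and pos: "\<And>C. is_component W E C \<Longrightarrow> C \<inter> D = {} \<Longrightarrow> chrom_two_s_positive C E"
  shows "chrom_two_s_positive W E"
proof -
  have W: "edge_closed W E W" by (simp add: edge_closed_def)
  have DW: "D \<subseteq> W" using D by (simp add: edge_closed_def)
  have "symm_unimodal (card (W - D)) (bicolouring_count (W - D) E)"
    using pos by (intro symm_unimodal_edge_closed[OF sym fin] edge_closed_Diff[OF sym W D DW]) blast+
  then have "symm_unimodal (card W) (bicolouring_count W E)"
    using symm_unimodal_convolve[OF SU_D] card_Diff_add[OF fin DW]
      bicolouring_count_edge_closed_split[OF sym fin D DW order_refl] by simp
  then show ?thesis using chrom_two_s_positive_iff_symm_unimodal[OF fin ne] by simp
qed


section \<open>Bipartite components\<close>

lemma bicolouring_alternates: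
  assumes "independent E X" "independent E (T - X)" "y \<in> T" "z \<in> T" "E y z"
  shows "z \<in> X \<longleftrightarrow> y \<notin> X"
  using assms unfolding independent_def by blast

text \<open>A bicolouring of a connected graph is determined by the colour of one vertex.\<close>

lemma bicolouring_of_bipartite_component:
  assumes x0: "x0 \<in> W" and T: "T = {y\<in>W. reachable W E x0 y}"
    and bip: "bipartite_classes T E A B" and X: "X \<in> bicolourings T E k"
  shows "X = A \<or> X = B"
proof -
  have X: "X \<subseteq> T" "independent E X" "independent E (T - X)" using X by (auto simp: bicolourings_def)
  have AB: "A \<union> B = T" "A \<inter> B = {}" "independent E A" "independent E B"
    using bip by (auto simp: bipartite_classes_def independent_def)
  then have B: "B = T - A" "A \<subseteq> T" by blast+
  have same: "(y \<in> X \<longleftrightarrow> x0 \<in> X) \<longleftrightarrow> (y \<in> A \<longleftrightarrow> x0 \<in> A)" if "reachable W E x0 y" for y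
    using that unfolding reachable_def
  proof (induction rule: rtranclp_induct)
    case base then show ?case by simp
  next
    case (step y z)
    have ry: "reachable W E x0 y" using step(1) unfolding reachable_def .
    have y: "y \<in> T" using ry reachable_in[OF ry x0] T by simp
    have z: "z \<in> T" using reachable_step[OF ry] step(2) T by simp
    have "E y z" using step(2) by simp
    have "independent E (T - A)" using AB(4) B(1) by simp
    then have "z \<in> A \<longleftrightarrow> y \<notin> A" by (rule bicolouring_alternates[OF AB(3) _ y z \<open>E y z\<close>])
    moreover have "z \<in> X \<longleftrightarrow> y \<notin> X" by (rule bicolouring_alternates[OF X(2,3) y z \<open>E y z\<close>])
    ultimately show ?case using step(3) by blast
  qed
  show ?thesis
  proof (cases "x0 \<in> X \<longleftrightarrow> x0 \<in> A")
    case True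
    then have "y \<in> X \<longleftrightarrow> y \<in> A" if "y \<in> T" for y using same[of y] that T by auto
    then show ?thesis using X(1) B(2) by blast
  next
    case False
    then have "y \<in> X \<longleftrightarrow> y \<in> B" if "y \<in> T" for y using same[of y] that T B(1) by auto
    then show ?thesis using X(1) B(1) by blast
  qed
qed

lemma bicolouring_count_bipartite:
  assumes x0: "x0 \<in> W" and T: "T = {y\<in>W. reachable W E x0 y}" and bip: "bipartite_classes T E A B"
    and cA: "card A = r + 2" and cB: "card B = r"
  shows "bicolouring_count T E k = (if k = r then 1 else 0) + (if k = r + 2 then 1 else 0)"
proof -
  have "T - A = B" "T - B = A" "independent E A" "independent E B" "A \<subseteq> T" "B \<subseteq> T"
    using bip by (auto simp: bipartite_classes_def independent_def)
  then have "bicolourings T E k = {Y \<in> {A, B}. card Y = k}"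
    using bicolouring_of_bipartite_component[OF x0 T bip] by (auto simp: bicolourings_def)
  also have "\<dots> = (if k = r then {B} else {}) \<union> (if k = r + 2 then {A} else {})"
    using cA cB by auto
  finally show ?thesis by (simp add: bicolouring_count_def)
qed

text \<open>
  The bicolouring counts [k = r] + [k = r + 2] of the component, convolved with 1 + [k = 1],
  give the block [r \<le> k \<le> r + 3].
\<close>

lemma symm_unimodal_bipartite_insert_isolated:
  assumes x0: "x0 \<in> W" and T: "T = {y\<in>W. reachable W E x0 y}" and bip: "bipartite_classes T E A B"
    and cA: "card A = r + 2" and cB: "card B = r" and r: "r \<ge> 1"
    and fin: "finite T" and x: "x \<notin> T" "\<not> E x x" "\<And>u. u \<in> T \<Longrightarrow> \<not> E x u \<and> \<not> E u x"
  shows "symm_unimodal (card (insert x T)) (bicolouring_count (insert x T) E)"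
proof -
  have "card T = 2 * r + 2"
    using bip cA cB fin card_Un_disjoint[of A B]
    by (auto simp: bipartite_classes_def intro: finite_subset)
  then have "card (insert x T) = 2 * r + 3" using fin x by simp
  moreover have "bicolouring_count (insert x T) E = sym_block (2 * r + 3) r"
    using bicolouring_count_insert_isolated[of T x E, OF fin x]
      bicolouring_count_bipartite[OF x0 T bip cA cB] r
    by (intro ext) (auto simp: sym_block_def)
  ultimately show ?thesis by (simp add: symm_unimodal_sym_block)
qed


lemma finite_clan_vertices:
  assumes "finite V"
  shows "finite (clan_vertices V \<alpha>)"
proof -
  have "clan_vertices V \<alpha> = (\<Union>v\<in>V. {v} \<times> {..<\<alpha> v})" by (auto simp: clan_vertices_def)
  then show ?thesis using assms by simp
qed

lemma sym_clan_edges: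
  assumes "simple_graph V E"
  shows "\<forall>u\<in>clan_vertices V \<alpha>. \<forall>v\<in>clan_vertices V \<alpha>. clan_edges E u v \<longrightarrow> clan_edges E v u"
  using assms by (auto simp: clan_vertices_def clan_edges_def simple_graph_def)

theorem mainTheorem14:
  fixes V :: "'a set" and E :: "'a \<Rightarrow> 'a \<Rightarrow> bool" and \<alpha> :: "'a \<Rightarrow> nat"
    and T :: "('a \<times> nat) set" and r :: nat
  assumes "forest V E"
    and "\<not> chrom_two_s_positive (clan_vertices V \<alpha>) (clan_edges E)"
    and "is_component (clan_vertices V \<alpha>) (clan_edges E) T"
    and "\<not> chrom_two_s_positive T (clan_edges E)"
    and "\<forall>D. is_component (clan_vertices V \<alpha>) (clan_edges E) D \<and> D \<noteq> T
            \<longrightarrow> chrom_two_s_positive D (clan_edges E)"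
    and "r \<ge> 1"
    and "\<exists>A B. bipartite_classes T (clan_edges E) A B \<and> card A = r + 2 \<and> card B = r"
  shows "\<not> (\<exists>x. isolated_vertex (clan_vertices V \<alpha>) (clan_edges E) x)"
proof
  let ?W = "clan_vertices V \<alpha>" and ?E = "clan_edges E"
  assume "\<exists>x. isolated_vertex ?W ?E x"
  then obtain x where x: "isolated_vertex ?W ?E x" ..
  have sg: "simple_graph V E" using assms(1) by (simp add: forest_def)
  have fin: "finite ?W" using sg finite_clan_vertices by (auto simp: simple_graph_def)
  note sym = sym_clan_edges[OF sg, of \<alpha>]
  obtain x0 where x0: "x0 \<in> ?W" "T = {y\<in>?W. reachable ?W ?E x0 y}"
    using assms(3) unfolding is_component_def by blast
  obtain A B where AB: "bipartite_classes T ?E A B" "card A = r + 2" "card B = r"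
    using assms(7) by blast
  have finT: "finite T" using x0 fin by simp
  have "T \<noteq> {}" "T \<noteq> {x}" using AB by (auto simp: bipartite_classes_def card_Suc_eq)
  then have xT: "x \<notin> T" using component_of_isolated_vertex[OF sym x x0(2)] by blast
  have x_iso: "x \<in> ?W" "\<not> ?E x x" "\<And>u. u \<in> T \<Longrightarrow> \<not> ?E x u \<and> \<not> ?E u x"
    using x sym x0(2) by (auto simp: isolated_vertex_def)
  have "symm_unimodal (card (insert x T)) (bicolouring_count (insert x T) ?E)"
    by (rule symm_unimodal_bipartite_insert_isolated[OF x0 AB assms(6) finT xT x_iso(2,3)])
  moreover have "edge_closed ?W ?E (insert x T)"
    using edge_closed_insert_isolated[OF edge_closed_component[OF x0(1)] x] x0(2) by simp
  moreover have "C \<noteq> T" if "C \<inter> insert x T = {}" for C using that \<open>T \<noteq> {}\<close> by auto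
  ultimately have "chrom_two_s_positive ?W ?E"
    using chrom_two_s_positive_if_other_components[OF sym fin] assms(5) x_iso(1) by blast
  with assms(2) show False ..
qed

end
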